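(* Let $d$ be a positive integer, let $\epsilon>0$, let $C>0$ and $\alpha>0$, and let $1\le p<2<q\le\infty$ with $\frac1p+\frac1q=1$. Put $\delta=2^{-7}\frac{\alpha p}{2-p}\epsilon^2$. There is a constant $c>0$, depending only on $d,C,\alpha,p,\epsilon$ (and not on $N$), such that the following holds. Let $\mathcal{G}$ be a finite $(d+1)$-regular graph and $N$ a positive integer such that $$\|S_n\|_{L^p(\mathcal{G})\to L^q(\mathcal{G})}\le C d^{-\alpha n}\quad\text{for all } n\le N.$$ Then for every eigenfunction $\phi$ of the discrete Laplacian on $\mathcal{G}$ with $\sum_{x\in\mathcal{G}}|\phi(x)|^2=1$, every subset $E\subset\mathcal{G}$ with $\sum_{x\in E}|\phi(x)|^2>\epsilon$ satisfies $$|E|\ge c\, d^{\delta N}.$$ (That is, $|E|\gtrsim d^{\delta N}$ as $N\to\infty$, with implied constant depending on $d,C,\alpha,p,\epsilon$.)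
   Context: $L^p(\mathcal{G})$ denotes functions on the vertex set of $\mathcal{G}$ with the counting measure. For $n\ge 0$ and $f:\mathcal{G}\to\mathbb{C}$, the operator $S_n$ is defined by $$S_n f(x)=d^{-n/2}\sum_{\gamma} f(\gamma_n),$$ the sum over all non-backtracking walks $\gamma=(\gamma_0=x,\gamma_1,\dots,\gamma_n)$ of length $n$ in $\mathcal{G}$ starting at $x$ (consecutive vertices adjacent, $\gamma_{i+1}\ne\gamma_{i-1}$). Equivalently, $S_n$ is the projection to $\mathcal{G}$ of the operator $\tilde S_n f(x)=d^{-n/2}\sum_{\operatorname{dist}(x,y)=n}f(y)$ on the $(d+1)$-regular tree $\mathcal{T}_{d+1}$ (the universal cover of $\mathcal{G}$). The discrete Laplacian is $\Delta f=\left(\frac{\sqrt d}{d+1}T_d-1\right)f$, where $T_d f(x)=\frac{1}{\sqrt d}\sum_{y\sim x}f(y)$; its eigenfunctions are exactly the eigenfunctions of $T_d$. *)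

theory Defs
  imports "HOL-Analysis.Analysis"
begin

definition graph :: "nat set \<Rightarrow> (nat \<Rightarrow> nat \<Rightarrow> bool) \<Rightarrow> bool" where
  "graph V A \<longleftrightarrow> finite V \<and> (\<forall>x y. A x y \<longrightarrow> x \<in> V \<and> y \<in> V)
     \<and> (\<forall>x y. A x y \<longrightarrow> A y x) \<and> (\<forall>x. \<not> A x x)"

definition regular_graph :: "nat \<Rightarrow> nat set \<Rightarrow> (nat \<Rightarrow> nat \<Rightarrow> bool) \<Rightarrow> bool" where
  "regular_graph k V A \<longleftrightarrow> graph V A \<and> (\<forall>x\<in>V. card {y. A x y} = k)"

definition nb_walks :: "(nat \<Rightarrow> nat \<Rightarrow> bool) \<Rightarrow> nat \<Rightarrow> nat \<Rightarrow> nat list set" where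
  "nb_walks A x n = {\<gamma>. length \<gamma> = Suc n \<and> \<gamma> ! 0 = x
      \<and> (\<forall>i<n. A (\<gamma> ! i) (\<gamma> ! Suc i))
      \<and> (\<forall>i. 0 < i \<and> i < n \<longrightarrow> \<gamma> ! Suc i \<noteq> \<gamma> ! (i - 1))}"

definition S_op :: "nat \<Rightarrow> (nat \<Rightarrow> nat \<Rightarrow> bool) \<Rightarrow> nat \<Rightarrow> (nat \<Rightarrow> complex) \<Rightarrow> nat \<Rightarrow> complex" where
  "S_op d A n f x = complex_of_real (real d powr (- real n / 2)) * (\<Sum>\<gamma>\<in>nb_walks A x n. f (last \<gamma>))"

definition lp_norm :: "nat set \<Rightarrow> ereal \<Rightarrow> (nat \<Rightarrow> complex) \<Rightarrow> real" where
  "lp_norm V p f = (if p = \<infinity> then Max (insert 0 ((\<lambda>x. cmod (f x)) ` V))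
      else (\<Sum>x\<in>V. cmod (f x) powr real_of_ereal p) powr (1 / real_of_ereal p))"

definition op_norm :: "nat set \<Rightarrow> ereal \<Rightarrow> ereal \<Rightarrow> ((nat \<Rightarrow> complex) \<Rightarrow> (nat \<Rightarrow> complex)) \<Rightarrow> real" where
  "op_norm V p q T = Sup {lp_norm V q (T f) | f. lp_norm V p f \<le> 1}"

definition T_op :: "nat \<Rightarrow> (nat \<Rightarrow> nat \<Rightarrow> bool) \<Rightarrow> (nat \<Rightarrow> complex) \<Rightarrow> nat \<Rightarrow> complex" where
  "T_op d A f x = complex_of_real (1 / sqrt (real d)) * (\<Sum>y\<in>{y. A x y}. f y)"

definition laplacian :: "nat \<Rightarrow> (nat \<Rightarrow> nat \<Rightarrow> bool) \<Rightarrow> (nat \<Rightarrow> complex) \<Rightarrow> nat \<Rightarrow> complex" where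
  "laplacian d A f x = complex_of_real (sqrt (real d) / (real d + 1)) * T_op d A f x - f x"

definition laplace_eigenfunction :: "nat \<Rightarrow> nat set \<Rightarrow> (nat \<Rightarrow> nat \<Rightarrow> bool) \<Rightarrow> (nat \<Rightarrow> complex) \<Rightarrow> bool" where
  "laplace_eigenfunction d V A \<phi> \<longleftrightarrow> (\<exists>x\<in>V. \<phi> x \<noteq> 0) \<and>
     (\<exists>ev::complex. \<forall>x\<in>V. laplacian d A \<phi> x = ev * \<phi> x)"

end

theory Submission
  imports Defs
begin

text \<open>Let \<open>\<phi>\<close> be an eigenfunction of \<open>T\<close> and \<open>g\<close> its restriction to \<open>E\<close>, so
  \<open>a = \<parallel>g\<parallel>\<^sup>2 > \<epsilon>\<close> and, by Hoelder, \<open>\<parallel>g\<parallel>\<^sub>p\<^sup>2 \<le> |E|\<^bsup>(2-p)/p\<^esup>\<close>. Since the non-backtracking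
  operators are Chebyshev polynomials in \<open>T\<close>, \<open>S\<^sub>n = U\<^sub>n(T/2) - U\<^bsub>n-2\<^esub>(T/2)/d\<close>, the decay of
  \<open>\<parallel>S\<^sub>n\<parallel>\<^bsub>p\<rightarrow>q\<^esub>\<close> makes \<open>\<langle>D\<^sub>n(T) g, g\<rangle>\<close> small for the Dickson polynomials \<open>D\<^sub>n\<close> when \<open>|E|\<close> is
  small. Then the vectors \<open>D\<^bsub>k n\<^sub>0\<^esub>(T) g\<close>, \<open>1 \<le> k \<le> 2m\<close>, are almost orthogonal, as
  \<open>D\<^sub>k D\<^sub>l = D\<^bsub>k+l\<^esub> + D\<^bsub>|k-l|\<^esub>\<close>, which is incompatible with the correlation \<open>a\<close> of \<open>g\<close> with
  \<open>\<phi>\<close> once \<open>m \<approx> 5/\<epsilon>\<^sup>2\<close>; taking \<open>n\<^sub>0 \<approx> N/4m\<close> turns this into \<open>|E| \<ge> c d\<^bsup>\<delta> N\<^esup>\<close>.\<close>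

section \<open>Non-backtracking walks\<close>

lemma nb_walks_0: "nb_walks A x 0 = {[x]}"
  unfolding nb_walks_def by (auto simp: length_Suc_conv)

lemma Cons_in_nb_walks_Suc:
  "z # \<gamma> \<in> nb_walks A x (Suc n) \<longleftrightarrow>
     z = x \<and> A x (\<gamma> ! 0) \<and> \<gamma> \<in> nb_walks A (\<gamma> ! 0) n \<and> (0 < n \<longrightarrow> \<gamma> ! 1 \<noteq> x)"
proof
  assume "z # \<gamma> \<in> nb_walks A x (Suc n)"
  then have len: "length \<gamma> = Suc n" and z: "z = x"
    and step: "\<And>i. i < Suc n \<Longrightarrow> A ((z # \<gamma>) ! i) ((z # \<gamma>) ! Suc i)"
    and turn: "\<And>i. 0 < i \<Longrightarrow> i < Suc n \<Longrightarrow> (z # \<gamma>) ! Suc i \<noteq> (z # \<gamma>) ! (i - 1)"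
    unfolding nb_walks_def by auto
  have "A (\<gamma> ! i) (\<gamma> ! Suc i)" if "i < n" for i
    using step[of "Suc i"] that by simp
  moreover have "\<gamma> ! Suc i \<noteq> \<gamma> ! (i - 1)" if "0 < i" "i < n" for i
    using turn[of "Suc i"] that by (cases i) auto
  moreover have "0 < n \<longrightarrow> \<gamma> ! 1 \<noteq> x"
    using turn[of 1] z by simp
  ultimately show "z = x \<and> A x (\<gamma> ! 0) \<and> \<gamma> \<in> nb_walks A (\<gamma> ! 0) n \<and> (0 < n \<longrightarrow> \<gamma> ! 1 \<noteq> x)"
    using step[of 0] z len unfolding nb_walks_def by auto
next
  assume "z = x \<and> A x (\<gamma> ! 0) \<and> \<gamma> \<in> nb_walks A (\<gamma> ! 0) n \<and> (0 < n \<longrightarrow> \<gamma> ! 1 \<noteq> x)"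
  then have z: "z = x" and len: "length \<gamma> = Suc n" and first: "0 < n \<longrightarrow> \<gamma> ! 1 \<noteq> x"
    and step: "\<forall>i<Suc n. A ((z # \<gamma>) ! i) ((z # \<gamma>) ! Suc i)"
    and turn: "\<forall>j. 0 < j \<and> j < n \<longrightarrow> \<gamma> ! Suc j \<noteq> \<gamma> ! (j - 1)"
    unfolding nb_walks_def by (auto simp: nth_Cons split: nat.splits)
  have "(z # \<gamma>) ! Suc i \<noteq> (z # \<gamma>) ! (i - 1)" if "0 < i" "i < Suc n" for i
    using that z first turn by (cases i; cases "i - 1") auto
  then show "z # \<gamma> \<in> nb_walks A x (Suc n)"
    using z len step unfolding nb_walks_def by auto
qed

lemma nb_walks_hd: "\<gamma> \<in> nb_walks A y n \<Longrightarrow> \<gamma> ! 0 = y"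
  unfolding nb_walks_def by blast

lemma nb_walks_length: "\<gamma> \<in> nb_walks A y n \<Longrightarrow> length \<gamma> = Suc n"
  unfolding nb_walks_def by blast

lemma nb_walks_nonempty: "\<gamma> \<in> nb_walks A y n \<Longrightarrow> \<gamma> \<noteq> []"
  using nb_walks_length[of \<gamma>] by auto

lemma last_Cons_nb_walk: "\<gamma> \<in> nb_walks A y n \<Longrightarrow> last (x # \<gamma>) = last \<gamma>"
  using nb_walks_nonempty[of \<gamma>] by simp

lemma nb_walks_Suc_iff:
  "\<gamma>' \<in> nb_walks A x (Suc n) \<longleftrightarrow>
     (\<exists>y \<gamma>. \<gamma>' = x # \<gamma> \<and> A x y \<and> \<gamma> \<in> nb_walks A y n \<and> (0 < n \<longrightarrow> \<gamma> ! 1 \<noteq> x))"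
proof
  assume w: "\<gamma>' \<in> nb_walks A x (Suc n)"
  then obtain z \<gamma> where z: "\<gamma>' = z # \<gamma>"
    unfolding nb_walks_def by (cases \<gamma>') auto
  with w have "z = x \<and> A x (\<gamma> ! 0) \<and> \<gamma> \<in> nb_walks A (\<gamma> ! 0) n \<and> (0 < n \<longrightarrow> \<gamma> ! 1 \<noteq> x)"
    by (simp add: Cons_in_nb_walks_Suc)
  with z show "\<exists>y \<gamma>. \<gamma>' = x # \<gamma> \<and> A x y \<and> \<gamma> \<in> nb_walks A y n \<and> (0 < n \<longrightarrow> \<gamma> ! 1 \<noteq> x)"
    by blast
next
  assume "\<exists>y \<gamma>. \<gamma>' = x # \<gamma> \<and> A x y \<and> \<gamma> \<in> nb_walks A y n \<and> (0 < n \<longrightarrow> \<gamma> ! 1 \<noteq> x)"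
  then show "\<gamma>' \<in> nb_walks A x (Suc n)"
    using Cons_in_nb_walks_Suc nb_walks_hd by blast
qed

section \<open>Dickson polynomials\<close>

definition nat_dist :: "nat \<Rightarrow> nat \<Rightarrow> nat" where
  "nat_dist a b = (if b \<le> a then a - b else b - a)"

lemma nat_dist_Suc_cases:
  "(Suc (nat_dist a (Suc b)) = nat_dist a (Suc (Suc b)) \<and> nat_dist (nat_dist a (Suc b)) 1 = nat_dist a b) \<or>
   (Suc (nat_dist a (Suc b)) = nat_dist a b \<and> nat_dist (nat_dist a (Suc b)) 1 = nat_dist a (Suc (Suc b)))"
  unfolding nat_dist_def by auto

lemma nat_dist_mult: "nat_dist (l * n0) (k * n0) = nat_dist l k * n0"
  unfolding nat_dist_def by (auto simp: diff_mult_distrib)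

lemma nat_dist_ge_1: "k \<noteq> l \<Longrightarrow> 1 \<le> nat_dist l k"
  unfolding nat_dist_def by auto

lemma nat_dist_le_add: "nat_dist l k \<le> l + k"
  unfolding nat_dist_def by auto

text \<open>\<open>dickson \<mu> n\<close> is the Dickson polynomial \<open>D\<^sub>n(\<mu>)\<close>, characterised by
  \<open>D\<^sub>n(2 cos \<theta>) = 2 cos (n \<theta>)\<close>; hence \<open>D\<^sub>a D\<^sub>b = D\<^bsub>a+b\<^esub> + D\<^bsub>|a-b|\<^esub>\<close>.\<close>

fun dickson :: "complex \<Rightarrow> nat \<Rightarrow> complex" where
  "dickson \<mu> 0 = 2"
| "dickson \<mu> (Suc 0) = \<mu>"
| "dickson \<mu> (Suc (Suc n)) = \<mu> * dickson \<mu> (Suc n) - dickson \<mu> n"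

lemma dickson_mult_1: "\<mu> * dickson \<mu> k = dickson \<mu> (Suc k) + dickson \<mu> (nat_dist k 1)"
  by (cases k) (auto simp: nat_dist_def)

lemma dickson_mult: "dickson \<mu> a * dickson \<mu> b = dickson \<mu> (a + b) + dickson \<mu> (nat_dist a b)"
proof (induction b arbitrary: a rule: less_induct)
  case (less b)
  consider "b = 0" | "b = 1" | b' where "b = Suc (Suc b')" by (metis One_nat_def not0_implies_Suc)
  then show ?case
  proof cases
    case 1 then show ?thesis by (simp add: nat_dist_def)
  next
    case 2 then show ?thesis using dickson_mult_1[of \<mu> a] by (simp add: mult.commute)
  next
    case 3
    have "dickson \<mu> a * dickson \<mu> b = \<mu> * (dickson \<mu> a * dickson \<mu> (Suc b')) - dickson \<mu> a * dickson \<mu> b'"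
      using 3 by (simp add: algebra_simps)
    also have "\<dots> = \<mu> * dickson \<mu> (a + Suc b') + \<mu> * dickson \<mu> (nat_dist a (Suc b')) - dickson \<mu> (a + b') - dickson \<mu> (nat_dist a b')"
      using less.IH[of "Suc b'" a] less.IH[of b' a] 3 by (simp add: algebra_simps)
    also have "\<mu> * dickson \<mu> (a + Suc b') = dickson \<mu> (a + b) + dickson \<mu> (a + b')"
      using dickson_mult_1[of \<mu> "a + Suc b'"] 3 by (simp add: nat_dist_def)
    also have "\<mu> * dickson \<mu> (nat_dist a (Suc b')) = dickson \<mu> (Suc (nat_dist a (Suc b'))) + dickson \<mu> (nat_dist (nat_dist a (Suc b')) 1)"
      by (rule dickson_mult_1)
    finally show ?thesis using nat_dist_Suc_cases[of a b'] 3 by auto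
  qed
qed

lemma dickson_double: "dickson \<mu> (2 * n) = dickson \<mu> n * dickson \<mu> n - 2"
  using dickson_mult[of \<mu> n n] by (simp add: nat_dist_def mult_2)

lemma norm_sq_add_norm_sq_diff_2_ge:
  fixes z :: complex
  shows "(cmod z)^2 + (cmod (z*z - 2))^2 \<ge> 7/4"
proof -
  let ?u = "(cmod z)^2"
  have t: "cmod (z*z - 2) \<ge> 2 - ?u"
  proof -
    have "cmod (2::complex) \<le> cmod (z*z) + cmod (2 - z*z)" by (rule norm_triangle_sub)
    moreover have "cmod (2 - z*z) = cmod (z*z - 2)" by (rule norm_minus_commute)
    ultimately show ?thesis by (simp add: norm_mult power2_eq_square)
  qed
  show ?thesis
  proof (cases "?u \<le> 2")
    case True
    then have "(2 - ?u)^2 \<le> (cmod (z*z - 2))^2" using t by (intro power_mono) auto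
    moreover have "?u + (2 - ?u)^2 - 7/4 = (?u - 3/2)^2" by (simp add: power2_eq_square algebra_simps)
    moreover have "(?u - 3/2)^2 \<ge> 0" by simp
    ultimately show ?thesis by linarith
  next
    case False
    have "(cmod (z*z - 2))^2 \<ge> 0" by simp
    then show ?thesis using False by linarith
  qed
qed

lemma sum_sq_lower_of_doubling:
  fixes e :: "nat \<Rightarrow> complex"
  assumes e2: "\<And>k. e (2 * k) = e k * e k - 2"
  shows "7 * real m / 8 \<le> (\<Sum>k\<in>{1..2*m}. (cmod (e k))^2)"
proof -
  let ?Q = "(\<Sum>k\<in>{1..2*m}. (cmod (e k))^2)"
  have "7 * real m / 4 = (\<Sum>k\<in>{1..m}. 7/4)" by simp
  also have "\<dots> \<le> (\<Sum>k\<in>{1..m}. (cmod (e k))^2 + (cmod (e (2*k)))^2)"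
    by (rule sum_mono) (simp only: e2 norm_sq_add_norm_sq_diff_2_ge)
  also have "\<dots> = (\<Sum>k\<in>{1..m}. (cmod (e k))^2) + (\<Sum>k\<in>{1..m}. (cmod (e (2*k)))^2)"
    by (rule sum.distrib)
  also have "(\<Sum>k\<in>{1..m}. (cmod (e k))^2) \<le> ?Q"
    by (rule sum_mono2) auto
  also have "(\<Sum>k\<in>{1..m}. (cmod (e (2*k)))^2) = (\<Sum>j\<in>(\<lambda>k. 2*k) ` {1..m}. (cmod (e j))^2)"
    by (subst sum.reindex) (auto simp: inj_on_def)
  also have "\<dots> \<le> ?Q"
    by (rule sum_mono2) auto
  finally show ?thesis by simp
qed

lemma norm_quadratic_form_le:
  fixes e :: "'i \<Rightarrow> complex" and G :: "'i \<Rightarrow> 'i \<Rightarrow> complex"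
  assumes K: "finite K" and r: "r \<ge> 0" "real (card K) * r \<le> 2"
    and G: "\<And>k l. k \<in> K \<Longrightarrow> l \<in> K \<Longrightarrow> cmod (G k l) \<le> r + (if k = l then 2 else 0)"
  shows "cmod (\<Sum>k\<in>K. \<Sum>l\<in>K. e k * cnj (e l) * G k l) \<le> 4 * (\<Sum>k\<in>K. (cmod (e k))^2)"
proof -
  let ?Q = "\<Sum>k\<in>K. (cmod (e k))^2"
  have "cmod (\<Sum>k\<in>K. \<Sum>l\<in>K. e k * cnj (e l) * G k l)
      \<le> (\<Sum>k\<in>K. \<Sum>l\<in>K. cmod (e k) * cmod (e l) * (r + (if k = l then 2 else 0)))"
    by (intro order_trans[OF norm_sum] sum_mono)
       (simp add: norm_mult G mult_left_mono order_trans[OF norm_sum] sum_mono)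
  also have "\<dots> = (\<Sum>k\<in>K. \<Sum>l\<in>K. r * (cmod (e k) * cmod (e l))
      + (if k = l then 2 * (cmod (e k))^2 else 0))"
    by (intro sum.cong refl) (auto simp: algebra_simps power2_eq_square)
  also have "\<dots> = (\<Sum>k\<in>K. \<Sum>l\<in>K. r * (cmod (e k) * cmod (e l))) + 2 * ?Q"
    by (simp add: sum.distrib sum.delta[OF K] sum.delta'[OF K] sum_distrib_left)
  also have "(\<Sum>k\<in>K. \<Sum>l\<in>K. r * (cmod (e k) * cmod (e l))) = r * (\<Sum>k\<in>K. cmod (e k) * 1)^2"
    unfolding power2_eq_square sum_product by (simp add: sum_distrib_left)
  also have "(\<Sum>k\<in>K. cmod (e k) * 1)^2 \<le> ?Q * (\<Sum>k\<in>K. 1^2)"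
    by (rule Cauchy_Schwarz_ineq_sum)
  also have "r * (?Q * (\<Sum>k\<in>K. 1^2)) = (real (card K) * r) * ?Q"
    by simp
  also have "\<dots> \<le> 2 * ?Q"
    using r by (intro mult_right_mono) (auto simp: sum_nonneg)
  finally show ?thesis using r by (simp add: mult_left_mono)
qed

lemma linear_times_geometric_le:
  fixes \<sigma> :: real
  assumes "0 < \<sigma>" "\<sigma> < 1"
  shows "(real n + 1) * (\<sigma>^2)^n \<le> \<sigma>^n / (1 - \<sigma>)"
proof -
  have "(real n + 1) * \<sigma>^n = (\<Sum>i<Suc n. \<sigma>^n)"
    by simp
  also have "\<dots> \<le> (\<Sum>i<Suc n. \<sigma>^i)"
    by (rule sum_mono) (use assms in \<open>auto intro: power_decreasing\<close>)
  also have "\<dots> = (1 - \<sigma>^Suc n) / (1 - \<sigma>)"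
    using assms by (simp only: sum_gp_strict) simp
  also have "\<dots> \<le> 1 / (1 - \<sigma>)"
    using assms by (intro divide_right_mono) auto
  finally have "(real n + 1) * \<sigma>^n * \<sigma>^n \<le> 1 / (1 - \<sigma>) * \<sigma>^n"
    using assms by (intro mult_right_mono) auto
  then show ?thesis
    by (simp add: power2_eq_square power_mult_distrib mult.assoc)
qed

lemma powr_power2: "(x::real) \<ge> 0 \<Longrightarrow> (x powr a)^2 = x powr (2 * a)"
  by (simp add: power2_eq_square powr_add[symmetric])

lemma powr_neg_half_Suc:
  fixes r :: real
  assumes "0 < r"
  shows "r powr (- real (Suc k) / 2) = r powr (- real k / 2) / sqrt r"
proof -
  have "r powr (- real (Suc k) / 2) = r powr (- real k / 2) * r powr (- 1 / 2)"
    by (simp add: powr_add[symmetric] field_simps)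
  also have "r powr (- 1 / 2) = 1 / sqrt r"
    using assms by (simp add: powr_minus_divide powr_half_sqrt)
  finally show ?thesis by simp
qed

lemma powr_neg_half_Suc_Suc:
  fixes r :: real
  assumes "0 < r"
  shows "r powr (- real (Suc (Suc k)) / 2) = r powr (- real k / 2) / r"
proof -
  have "- real (Suc (Suc k)) / 2 = - real k / 2 + (- 1)"
    by (simp add: field_simps)
  then have "r powr (- real (Suc (Suc k)) / 2) = r powr (- real k / 2) * r powr (- 1)"
    by (simp only: powr_add)
  also have "r powr (- 1) = 1 / r"
    using assms by (simp add: powr_minus_divide)
  finally show ?thesis by simp
qed

lemma powr_inverse_le:
  fixes x y a :: real
  assumes "0 \<le> x" "0 \<le> y" "x \<le> y powr a" "0 < a"
  shows "x powr (1 / a) \<le> y"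
proof -
  have "x powr (1 / a) \<le> (y powr a) powr (1 / a)"
    using assms by (intro powr_mono2) auto
  also have "\<dots> = y"
    using assms by (simp add: powr_powr)
  finally show ?thesis .
qed

lemma nat_ceiling_div_sq_mult_less:
  fixes \<epsilon> :: real
  assumes "0 < \<epsilon>" "\<epsilon> < 1"
  shows "real (nat \<lceil>5 / \<epsilon>^2\<rceil>) * \<epsilon>^2 < 6"
proof -
  have "real (nat \<lceil>5 / \<epsilon>^2\<rceil>) < 5 / \<epsilon>^2 + 1"
    using assms by (simp add: of_nat_nat) linarith
  then have "real (nat \<lceil>5 / \<epsilon>^2\<rceil>) * \<epsilon>^2 < (5 / \<epsilon>^2 + 1) * \<epsilon>^2"
    using assms by (intro mult_strict_right_mono) auto
  also have "\<dots> = 5 + \<epsilon>^2"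
    using assms by (simp add: field_simps)
  also have "\<dots> < 6"
    using assms by (simp add: abs_square_less_1)
  finally show ?thesis .
qed

lemma real_div_less_div_plus_1:
  assumes "0 < k"
  shows "real N / real k < real (N div k) + 1"
proof -
  have "N < k * (N div k + 1)"
    using dividend_less_times_div[OF assms, of N] by simp
  then have "real N < real k * (real (N div k) + 1)"
    by (metis of_nat_1 of_nat_add of_nat_less_iff of_nat_mult)
  then show ?thesis
    using assms by (simp add: field_simps)
qed

section \<open>\<open>L\<^sup>p\<close> norms with respect to counting measure\<close>

lemma sum_powr_zero:
  fixes a :: "'i \<Rightarrow> real"
  assumes "finite I" "r > 0" "\<And>i. i \<in> I \<Longrightarrow> a i \<ge> 0" "(\<Sum>i\<in>I. a i powr r) = 0" "i \<in> I"
  shows "a i = 0"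
proof -
  have "\<forall>i\<in>I. a i powr r = 0" using assms(1,4) sum_nonneg_eq_0_iff[of I "\<lambda>i. a i powr r"] by simp
  then show ?thesis using assms(5) by simp
qed

lemma Holder_sum:
  fixes a b :: "'i \<Rightarrow> real"
  assumes fin: "finite I" and r: "r > 1" and s: "s > 1" and rs: "1/r + 1/s = 1"
    and a: "\<And>i. i \<in> I \<Longrightarrow> a i \<ge> 0" and b: "\<And>i. i \<in> I \<Longrightarrow> b i \<ge> 0"
  shows "(\<Sum>i\<in>I. a i * b i) \<le> (\<Sum>i\<in>I. a i powr r) powr (1/r) * (\<Sum>i\<in>I. b i powr s) powr (1/s)"
proof -
  define SA where "SA = (\<Sum>i\<in>I. a i powr r)"
  define SB where "SB = (\<Sum>i\<in>I. b i powr s)"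
  define AA where "AA = SA powr (1/r)"
  define BB where "BB = SB powr (1/s)"
  have SA0: "SA \<ge> 0" unfolding SA_def by (simp add: sum_nonneg)
  have SB0: "SB \<ge> 0" unfolding SB_def by (simp add: sum_nonneg)
  show ?thesis
  proof (cases "SA = 0 \<or> SB = 0")
    case True
    then have "(\<Sum>i\<in>I. a i * b i) = 0"
    proof
      assume z: "SA = 0"
      have "a i = 0" if "i \<in> I" for i
        by (rule sum_powr_zero[where I=I and r=r and a=a]) (use fin a r z that in \<open>auto simp: SA_def\<close>)
      then show ?thesis by simp
    next
      assume z: "SB = 0"
      have "b i = 0" if "i \<in> I" for i
        by (rule sum_powr_zero[where I=I and r=s and a=b]) (use fin b s z that in \<open>auto simp: SB_def\<close>)
      then show ?thesis by simp
    qed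
    then show ?thesis by simp
  next
    case False
    then have SAp: "SA > 0" and SBp: "SB > 0" using SA0 SB0 by auto
    have AAp: "AA > 0" and BBp: "BB > 0" unfolding AA_def BB_def using SAp SBp by auto
    have AAr: "AA powr r = SA" unfolding AA_def using r SA0 by (simp add: powr_powr powr_one)
    have BBs: "BB powr s = SB" unfolding BB_def using s SB0 by (simp add: powr_powr powr_one)
    have "(\<Sum>i\<in>I. (a i / AA) * (b i / BB)) \<le> (\<Sum>i\<in>I. (a i / AA) powr r / r + (b i / BB) powr s / s)"
      by (rule sum_mono, rule Youngs_inequality) (use r s rs a b AAp BBp in auto)
    also have "\<dots> = (\<Sum>i\<in>I. a i powr r) / SA / r + (\<Sum>i\<in>I. b i powr s) / SB / s"
      by (simp add: powr_divide AAr BBs sum.distrib sum_divide_distrib)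
    also have "\<dots> = 1" using SAp SBp rs by (simp add: SA_def[symmetric] SB_def[symmetric])
    finally have "(\<Sum>i\<in>I. a i * b i) / (AA * BB) \<le> 1"
      by (simp add: sum_divide_distrib field_simps)
    then show ?thesis using AAp BBp by (simp add: AA_def BB_def SA_def SB_def field_simps)
  qed
qed

definition conj_exponents :: "real \<Rightarrow> ereal \<Rightarrow> bool" where
  "conj_exponents p q \<longleftrightarrow> (q = \<infinity> \<and> p = 1) \<or> (\<exists>q'. q = ereal q' \<and> q' > 1 \<and> p > 1 \<and> 1/p + 1/q' = 1)"

definition lp_exponent :: "ereal \<Rightarrow> bool" where
  "lp_exponent q \<longleftrightarrow> q = \<infinity> \<or> (\<exists>q'. q = ereal q' \<and> q' \<ge> 1)"

lemma conj_exponents_lp_exponent: "conj_exponents p q \<Longrightarrow> lp_exponent q \<and> lp_exponent (ereal p)"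
  unfolding conj_exponents_def lp_exponent_def by auto

lemma conj_exponentsI:
  assumes "1 \<le> p" "2 < q" "1 / ereal p + 1 / q = 1"
  shows "conj_exponents p q"
proof (cases q)
  case (real q')
  have "1 / ereal p = ereal (1/p)" using assms(1) by (simp add: one_ereal_def)
  moreover have "1 / ereal q' = ereal (1/q')" using assms(2) real by (simp add: one_ereal_def)
  ultimately have e: "1/p + 1/q' = 1" using assms(3) real by simp
  have q2: "q' > 2" using assms(2) real by simp
  then have "1/q' > 0" by simp
  then have "1/p < 1" using e by linarith
  then have "p > 1" using assms(1) by (simp add: field_simps)
  then show ?thesis unfolding conj_exponents_def using real q2 e by auto
next
  case PInf
  then have "1 / ereal p = 1" using assms(3) by simp
  then have "p = 1" using assms(1) by (simp add: one_ereal_def)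
  then show ?thesis unfolding conj_exponents_def using PInf by auto
next
  case MInf then show ?thesis using assms(2) by simp
qed

lemma lp_norm_finite: "lp_norm V (ereal p) f = (\<Sum>x\<in>V. cmod (f x) powr p) powr (1/p)"
  by (simp add: lp_norm_def)

lemma lp_norm_infinity: "lp_norm V \<infinity> f = Max (insert 0 ((\<lambda>x. cmod (f x)) ` V))"
  by (simp add: lp_norm_def)

lemma lp_norm_pos:
  assumes "finite V" "x \<in> V" "f x \<noteq> 0" "p > 0"
  shows "lp_norm V (ereal p) f > 0"
proof -
  have "0 < cmod (f x) powr p"
    using assms by simp
  also have "\<dots> \<le> (\<Sum>y\<in>V. cmod (f y) powr p)"
    by (rule member_le_sum) (use assms in auto)
  finally show ?thesis
    using assms by (simp add: lp_norm_finite)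
qed

lemma lp_norm_ge_point:
  assumes "finite V" "x \<in> V" "lp_exponent q"
  shows "cmod (f x) \<le> lp_norm V q f"
  using assms(3) unfolding lp_exponent_def
proof
  assume "q = \<infinity>" then show ?thesis using assms by (simp add: lp_norm_infinity)
next
  assume "\<exists>q'. q = ereal q' \<and> q' \<ge> 1"
  then obtain q' where q: "q = ereal q'" "q' \<ge> 1" by blast
  have "cmod (f x) = (cmod (f x) powr q') powr (1/q')" using q by (simp add: powr_powr)
  also have "\<dots> \<le> (\<Sum>y\<in>V. cmod (f y) powr q') powr (1/q')"
    by (rule powr_mono2) (use q assms in \<open>auto intro!: member_le_sum\<close>)
  finally show ?thesis using q by (simp add: lp_norm_finite)
qed

lemma lp_norm_scale:
  assumes "finite V" "lp_exponent q" "k \<ge> 0"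
  shows "lp_norm V q (\<lambda>x. of_real k * f x) = k * lp_norm V q f"
  using assms(2) unfolding lp_exponent_def
proof
  assume qi: "q = \<infinity>"
  show ?thesis
  proof (cases "V = {}")
    case True then show ?thesis using qi by (simp add: lp_norm_infinity)
  next
    case False
    have m: "mono (\<lambda>t::real. k * t)" using assms(3) by (simp add: mono_def mult_left_mono)
    have "k * Max (insert 0 ((\<lambda>x. cmod (f x)) ` V)) = Max ((\<lambda>t. k * t) ` insert 0 ((\<lambda>x. cmod (f x)) ` V))"
      by (rule mono_Max_commute[OF m]) (use assms in auto)
    also have "(\<lambda>t. k * t) ` insert 0 ((\<lambda>x. cmod (f x)) ` V) = insert 0 ((\<lambda>x. cmod (of_real k * f x)) ` V)"
      using assms(3) by (auto simp: image_image norm_mult)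
    finally show ?thesis using qi by (simp add: lp_norm_infinity)
  qed
next
  assume "\<exists>q'. q = ereal q' \<and> q' \<ge> 1"
  then obtain q' where q: "q = ereal q'" "q' \<ge> 1" by blast
  have "(\<Sum>x\<in>V. cmod (of_real k * f x) powr q') = k powr q' * (\<Sum>x\<in>V. cmod (f x) powr q')"
    using assms(3) by (simp add: norm_mult powr_mult sum_distrib_left)
  then have "lp_norm V q (\<lambda>x. of_real k * f x) = (k powr q') powr (1/q') * (\<Sum>x\<in>V. cmod (f x) powr q') powr (1/q')"
    using q by (simp add: lp_norm_finite powr_mult)
  also have "(k powr q') powr (1/q') = k" using q assms(3) by (simp add: powr_powr)
  finally show ?thesis using q by (simp add: lp_norm_finite)
qed

lemma lp_norm_le_const:
  assumes "finite V" "lp_exponent q" "K \<ge> 0" "\<And>x. x \<in> V \<Longrightarrow> cmod (f x) \<le> K"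
  shows "lp_norm V q f \<le> (real (card V) + 1) * K"
  using assms(2) unfolding lp_exponent_def
proof
  assume qi: "q = \<infinity>"
  have "Max (insert 0 ((\<lambda>x. cmod (f x)) ` V)) \<le> K"
    using assms by (subst Max_le_iff) auto
  also have "K \<le> (real (card V) + 1) * K" using assms(3) by (simp add: algebra_simps)
  finally show ?thesis using qi by (simp add: lp_norm_infinity)
next
  assume "\<exists>q'. q = ereal q' \<and> q' \<ge> 1"
  then obtain q' where q: "q = ereal q'" "q' \<ge> 1" by blast
  let ?c = "real (card V)"
  have "(\<Sum>x\<in>V. cmod (f x) powr q') \<le> (\<Sum>x\<in>V. K powr q')"
    by (rule sum_mono, rule powr_mono2) (use q assms in auto)
  also have "\<dots> = ?c * K powr q'" by simp
  also have "\<dots> \<le> (?c + 1) powr q' * K powr q'"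
  proof (rule mult_right_mono)
    have "?c \<le> (?c + 1) powr 1" by simp
    also have "\<dots> \<le> (?c + 1) powr q'" by (rule powr_mono) (use q in auto)
    finally show "?c \<le> (?c + 1) powr q'" .
  qed simp
  also have "\<dots> = ((?c + 1) * K) powr q'" by (simp add: powr_mult)
  finally have le: "(\<Sum>x\<in>V. cmod (f x) powr q') \<le> ((?c + 1) * K) powr q'" .
  have "(\<Sum>x\<in>V. cmod (f x) powr q') powr (1/q') \<le> (((?c + 1) * K) powr q') powr (1/q')"
    using le q by (intro powr_mono2) (auto intro: sum_nonneg)
  also have "\<dots> = (?c + 1) * K" using q assms(3) by (simp add: powr_powr)
  finally show ?thesis using q by (simp add: lp_norm_finite)
qed

lemma lp_norm_Holder:
  assumes fin: "finite V" and c: "conj_exponents p q"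
  shows "(\<Sum>x\<in>V. cmod (u x) * cmod (v x)) \<le> lp_norm V q u * lp_norm V (ereal p) v"
  using c unfolding conj_exponents_def
proof
  assume qi: "q = \<infinity> \<and> p = 1"
  have "(\<Sum>x\<in>V. cmod (u x) * cmod (v x)) \<le> (\<Sum>x\<in>V. lp_norm V q u * cmod (v x))"
    by (rule sum_mono, rule mult_right_mono) (use lp_norm_ge_point[OF fin _ , of _ q u] qi in \<open>auto simp: lp_exponent_def\<close>)
  also have "\<dots> = lp_norm V q u * lp_norm V (ereal p) v"
    using qi by (simp add: lp_norm_finite sum_distrib_left abs_of_nonneg sum_nonneg)
  finally show ?thesis .
next
  assume "\<exists>q'. q = ereal q' \<and> q' > 1 \<and> p > 1 \<and> 1/p + 1/q' = 1"
  then obtain q' where q: "q = ereal q'" "q' > 1" "p > 1" "1/q' + 1/p = 1" by auto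
  show ?thesis using Holder_sum[OF fin q(2) q(3) q(4), of "\<lambda>x. cmod (u x)" "\<lambda>x. cmod (v x)"] q
    by (simp add: lp_norm_finite)
qed

lemma lp_norm_restrict_power2_le:
  fixes \<phi> :: "nat \<Rightarrow> complex"
  assumes fin: "finite V" and E: "E \<subseteq> V" and p: "1 \<le> p" "p < 2"
    and s1: "(\<Sum>x\<in>E. (cmod (\<phi> x))^2) \<le> 1"
  shows "(lp_norm V (ereal p) (\<lambda>x. if x \<in> E then \<phi> x else 0))^2 \<le> real (card E) powr ((2 - p) / p)"
proof -
  have finE: "finite E" using fin E finite_subset by blast
  have "(\<Sum>x\<in>V. cmod (if x \<in> E then \<phi> x else 0) powr p) = (\<Sum>x\<in>V. if x \<in> E then cmod (\<phi> x) powr p else 0)"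
    by (rule sum.cong) (use p in auto)
  also have "\<dots> = (\<Sum>x\<in>E. cmod (\<phi> x) powr p)"
    using E fin by (simp add: sum.If_cases Int_absorb1)
  finally have eqS: "(\<Sum>x\<in>V. cmod (if x \<in> E then \<phi> x else 0) powr p) = (\<Sum>x\<in>E. cmod (\<phi> x) powr p)" .
  define r where "r = 2 / p"
  define s where "s = 2 / (2 - p)"
  have r1: "r > 1" unfolding r_def using p by (simp add: field_simps)
  have s1': "s > 1" unfolding s_def using p by (simp add: field_simps)
  have rs: "1/r + 1/s = 1" unfolding r_def s_def using p by (simp add: field_simps)
  have "(\<Sum>x\<in>E. cmod (\<phi> x) powr p * 1) \<le> (\<Sum>x\<in>E. (cmod (\<phi> x) powr p) powr r) powr (1/r) * (\<Sum>x\<in>E. 1 powr s) powr (1/s)"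
    by (rule Holder_sum[OF finE r1 s1' rs]) auto
  also have "(\<Sum>x\<in>E. (cmod (\<phi> x) powr p) powr r) = (\<Sum>x\<in>E. (cmod (\<phi> x))^2)"
    unfolding r_def using p by (intro sum.cong refl) (simp add: powr_powr)
  also have "(\<Sum>x\<in>E. (cmod (\<phi> x))^2) powr (1/r) \<le> 1"
    by (rule powr_le1) (use r1 s1 in \<open>auto simp: sum_nonneg\<close>)
  also have "(\<Sum>x\<in>E. (1::real) powr s) powr (1/s) = real (card E) powr ((2 - p) / 2)"
    unfolding s_def using p by simp
  finally have le: "(\<Sum>x\<in>E. cmod (\<phi> x) powr p) \<le> real (card E) powr ((2 - p) / 2)"
    by (simp add: mult_right_mono)
  have "lp_norm V (ereal p) (\<lambda>x. if x \<in> E then \<phi> x else 0) = (\<Sum>x\<in>E. cmod (\<phi> x) powr p) powr (1/p)"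
    by (simp add: lp_norm_finite eqS)
  also have "\<dots> \<le> (real (card E) powr ((2 - p) / 2)) powr (1/p)"
    by (rule powr_mono2) (use le p in \<open>auto simp: sum_nonneg\<close>)
  also have "\<dots> = real (card E) powr ((2 - p) / (2 * p))" by (simp add: powr_powr)
  finally have l1: "lp_norm V (ereal p) (\<lambda>x. if x \<in> E then \<phi> x else 0) \<le> real (card E) powr ((2 - p) / (2 * p))" .
  have "(lp_norm V (ereal p) (\<lambda>x. if x \<in> E then \<phi> x else 0))^2 \<le> (real (card E) powr ((2 - p) / (2 * p)))^2"
    by (rule power_mono[OF l1]) (simp add: lp_norm_finite)
  also have "\<dots> = real (card E) powr (2 * ((2 - p) / (2 * p)))" by (rule powr_power2) simp
  also have "2 * ((2 - p) / (2 * p)) = (2 - p) / p" using p by (simp add: field_simps)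
  finally show ?thesis .
qed

section \<open>Walks and operators on a regular graph\<close>

locale nb_graph =
  fixes d :: nat and V :: "nat set" and A :: "nat \<Rightarrow> nat \<Rightarrow> bool"
  assumes regular: "regular_graph (d + 1) V A" and d_ge_1: "1 \<le> d"
begin

lemma finite_V: "finite V"
  using regular unfolding regular_graph_def graph_def by blast

lemma adj_in_V: "A x y \<Longrightarrow> x \<in> V \<and> y \<in> V"
  using regular unfolding regular_graph_def graph_def by blast

lemma adj_sym: "A x y \<Longrightarrow> A y x"
  using regular unfolding regular_graph_def graph_def by blast

lemma card_neighbours: "x \<in> V \<Longrightarrow> card {y. A x y} = d + 1"
  using regular unfolding regular_graph_def by blast

lemma finite_neighbours: "finite {y. A x y}"
  by (rule finite_subset[OF _ finite_V]) (auto dest: adj_in_V)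

lemma neighbours_outside: "x \<notin> V \<Longrightarrow> {y. A x y} = {}"
  by (auto dest: adj_in_V)

lemma d_pos: "real d > 0"
  using d_ge_1 by simp

lemma nb_walks_Suc:
  "nb_walks A x (Suc n) =
     (\<lambda>(y, \<gamma>). x # \<gamma>) ` (SIGMA y:{y. A x y}. {\<gamma> \<in> nb_walks A y n. 0 < n \<longrightarrow> \<gamma> ! 1 \<noteq> x})"
  by (auto simp: nb_walks_Suc_iff image_iff; blast)

lemma finite_nb_walks: "finite (nb_walks A x n)"
proof (induction n arbitrary: x)
  case 0
  then show ?case by (simp add: nb_walks_0)
next
  case (Suc n)
  show ?case unfolding nb_walks_Suc
    by (rule finite_imageI, rule finite_SigmaI[OF finite_neighbours]) (use Suc in auto)
qed

lemma sum_nb_walks_Suc: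
  "(\<Sum>\<gamma>\<in>nb_walks A x (Suc n). h \<gamma>) =
     (\<Sum>y\<in>{y. A x y}. \<Sum>\<gamma>\<in>{\<gamma> \<in> nb_walks A y n. 0 < n \<longrightarrow> \<gamma> ! 1 \<noteq> x}. h (x # \<gamma>))"
proof -
  have inj: "inj_on (\<lambda>(y, \<gamma>). x # \<gamma>)
      (SIGMA y:{y. A x y}. {\<gamma> \<in> nb_walks A y n. 0 < n \<longrightarrow> \<gamma> ! 1 \<noteq> x})"
    by (auto simp: inj_on_def dest: nb_walks_hd)
  show ?thesis
    unfolding nb_walks_Suc sum.reindex[OF inj]
    by (subst sum.Sigma[OF finite_neighbours]) (auto simp: finite_nb_walks case_prod_beta)
qed

definition walk_sum :: "(nat \<Rightarrow> complex) \<Rightarrow> nat \<Rightarrow> nat \<Rightarrow> complex" where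
  "walk_sum f x n = (\<Sum>\<gamma>\<in>nb_walks A x n. f (last \<gamma>))"

lemma walk_sum_0: "walk_sum f x 0 = f x"
  by (simp add: walk_sum_def nb_walks_0)

lemma walk_sum_1: "walk_sum f x (Suc 0) = (\<Sum>y\<in>{y. A x y}. f y)"
  unfolding walk_sum_def sum_nb_walks_Suc by (simp add: nb_walks_0)

lemma sum_nb_walks_through:
  assumes "A x y"
  shows "(\<Sum>\<gamma>\<in>nb_walks A y (Suc n). if \<gamma> ! 1 = x then f (last \<gamma>) else 0)
       = (\<Sum>\<delta>\<in>nb_walks A x n. if 0 < n \<longrightarrow> \<delta> ! 1 \<noteq> y then f (last \<delta>) else 0)"
proof -
  have "(\<Sum>\<gamma>\<in>nb_walks A y (Suc n). if \<gamma> ! 1 = x then f (last \<gamma>) else 0)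
      = (\<Sum>z\<in>{z. A y z}. if z = x then
           (\<Sum>\<delta>\<in>{\<delta> \<in> nb_walks A z n. 0 < n \<longrightarrow> \<delta> ! 1 \<noteq> y}. f (last \<delta>)) else 0)"
    unfolding sum_nb_walks_Suc
    by (rule sum.cong, simp, auto simp: nb_walks_hd dest: nb_walks_nonempty intro!: sum.cong sum.neutral)
  also have "\<dots> = (\<Sum>\<delta>\<in>{\<delta> \<in> nb_walks A x n. 0 < n \<longrightarrow> \<delta> ! 1 \<noteq> y}. f (last \<delta>))"
    using assms adj_sym by (simp add: sum.delta[OF finite_neighbours])
  finally show ?thesis
    by (simp add: sum.inter_filter[OF finite_nb_walks])
qed

lemma card_nb_continuations:
  assumes "x \<in> V" and "\<delta> \<in> nb_walks A x n"
  shows "card {y. A x y \<and> (0 < n \<longrightarrow> \<delta> ! 1 \<noteq> y)} = (if n = 0 then d + 1 else d)"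
proof (cases "n = 0")
  case True
  then show ?thesis using card_neighbours[OF assms(1)] by simp
next
  case False
  then have "A x (\<delta> ! 1)"
    using assms(2) nb_walks_hd[OF assms(2)] unfolding nb_walks_def by force
  moreover have "{y. A x y \<and> (0 < n \<longrightarrow> \<delta> ! 1 \<noteq> y)} = {y. A x y} - {\<delta> ! 1}"
    using False by auto
  ultimately show ?thesis
    using False card_neighbours[OF assms(1)] finite_neighbours by simp
qed

text \<open>A non-backtracking walk of length \<open>n + 1\<close> from a neighbour \<open>y\<close> of \<open>x\<close> either avoids
  \<open>x\<close> in its second vertex, and then \<open>x\<close> followed by it is a non-backtracking walk of length
  \<open>n + 2\<close>, or it is \<open>y\<close> followed by a walk \<open>\<delta>\<close> of length \<open>n\<close> from \<open>x\<close> with \<open>\<delta>\<^sub>1 \<noteq> y\<close>.\<close>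

lemma walk_sum_recurrence:
  assumes x: "x \<in> V"
  shows "(\<Sum>y\<in>{y. A x y}. walk_sum f y (Suc n))
       = walk_sum f x (Suc (Suc n)) + of_nat (if n = 0 then d + 1 else d) * walk_sum f x n"
proof -
  let ?N = "{y. A x y}"
  have split: "walk_sum f y (Suc n)
      = (\<Sum>\<gamma>\<in>{\<gamma> \<in> nb_walks A y (Suc n). \<gamma> ! 1 \<noteq> x}. f (last \<gamma>))
      + (\<Sum>\<gamma>\<in>nb_walks A y (Suc n). if \<gamma> ! 1 = x then f (last \<gamma>) else 0)" for y
    unfolding walk_sum_def
    by (simp add: sum.inter_filter[OF finite_nb_walks] flip: sum.distrib) (rule sum.cong, auto)
  have forward: "(\<Sum>y\<in>?N. \<Sum>\<gamma>\<in>{\<gamma> \<in> nb_walks A y (Suc n). \<gamma> ! 1 \<noteq> x}. f (last \<gamma>))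
      = walk_sum f x (Suc (Suc n))"
    unfolding walk_sum_def sum_nb_walks_Suc[where x = x and n = "Suc n"]
    by (rule sum.cong, simp, rule sum.cong, auto dest: nb_walks_nonempty)
  have "(\<Sum>y\<in>?N. \<Sum>\<gamma>\<in>nb_walks A y (Suc n). if \<gamma> ! 1 = x then f (last \<gamma>) else 0)
      = (\<Sum>y\<in>?N. \<Sum>\<delta>\<in>nb_walks A x n. if 0 < n \<longrightarrow> \<delta> ! 1 \<noteq> y then f (last \<delta>) else 0)"
    by (intro sum.cong refl sum_nb_walks_through) simp
  also have "\<dots> = (\<Sum>\<delta>\<in>nb_walks A x n. \<Sum>y\<in>?N. if 0 < n \<longrightarrow> \<delta> ! 1 \<noteq> y then f (last \<delta>) else 0)"
    by (rule sum.swap)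
  also have "\<dots> = (\<Sum>\<delta>\<in>nb_walks A x n. of_nat (if n = 0 then d + 1 else d) * f (last \<delta>))"
    using card_nb_continuations[OF x]
    by (intro sum.cong refl) (simp add: sum.inter_filter[OF finite_neighbours, symmetric])
  finally have backward: "(\<Sum>y\<in>?N. \<Sum>\<gamma>\<in>nb_walks A y (Suc n). if \<gamma> ! 1 = x then f (last \<gamma>) else 0)
      = of_nat (if n = 0 then d + 1 else d) * walk_sum f x n"
    by (simp add: walk_sum_def sum_distrib_left)
  show ?thesis using forward backward by (simp add: split sum.distrib)
qed

lemma nb_walks_last_in_V: "x \<in> V \<Longrightarrow> \<gamma> \<in> nb_walks A x n \<Longrightarrow> last \<gamma> \<in> V"
proof (induction n arbitrary: x \<gamma>)
  case 0 then show ?case by (simp add: nb_walks_0)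
next
  case (Suc n)
  then obtain y \<gamma>' where g: "\<gamma> = x # \<gamma>'" "A x y" "\<gamma>' \<in> nb_walks A y n" by (auto simp: nb_walks_Suc_iff)
  have "y \<in> V" using g(2) adj_in_V by blast
  then have "last \<gamma>' \<in> V" using Suc.IH g(3) by blast
  then show ?case using g last_Cons_nb_walk by simp
qed

lemma nb_walk_ending_at: "y \<in> V \<Longrightarrow> \<exists>x\<in>V. \<exists>\<gamma>\<in>nb_walks A x n. last \<gamma> = y"
proof (induction n)
  case 0 then show ?case by (auto simp: nb_walks_0)
next
  case (Suc n)
  then obtain x \<gamma> where x: "x \<in> V" and g: "\<gamma> \<in> nb_walks A x n" and l: "last \<gamma> = y" by blast
  have "\<not> {z. A x z} \<subseteq> {\<gamma>!1}"
  proof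
    assume "{z. A x z} \<subseteq> {\<gamma>!1}"
    then have "card {z. A x z} \<le> card {\<gamma>!1}" by (rule card_mono[rotated]) simp
    then show False using card_neighbours[OF x] d_ge_1 by simp
  qed
  then obtain z where z: "A x z" "z \<noteq> \<gamma>!1" by blast
  have zV: "z \<in> V" using z adj_in_V by blast
  have "z # \<gamma> \<in> nb_walks A z (Suc n)"
    unfolding nb_walks_Suc_iff using z g adj_sym by (intro exI[of _ x] exI[of _ \<gamma>]) auto
  moreover have "last (z # \<gamma>) = y" using last_Cons_nb_walk[OF g] l by simp
  ultimately show ?case using zV by blast
qed

definition T :: "(nat \<Rightarrow> complex) \<Rightarrow> nat \<Rightarrow> complex" where
  "T f = T_op d A f"

definition restr :: "(nat \<Rightarrow> complex) \<Rightarrow> nat \<Rightarrow> complex" where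
  "restr f = (\<lambda>x. if x \<in> V then f x else 0)"

definition vinner :: "(nat \<Rightarrow> complex) \<Rightarrow> (nat \<Rightarrow> complex) \<Rightarrow> complex" where
  "vinner u v = (\<Sum>x\<in>V. u x * cnj (v x))"

lemma T_eq: "T f x = of_real (1 / sqrt (real d)) * (\<Sum>y\<in>{y. A x y}. f y)"
  by (simp add: T_def T_op_def)

lemma T_out: "x \<notin> V \<Longrightarrow> T f x = 0"
  by (simp add: T_eq neighbours_outside)

lemma T_local: "(\<And>x. x \<in> V \<Longrightarrow> f x = g x) \<Longrightarrow> T f = T g"
  unfolding T_def T_op_def by (intro ext) (auto intro!: sum.cong dest: adj_in_V)

lemma T_restr: "T (restr f) = T f"
  by (rule T_local) (simp add: restr_def)

lemma restr_T: "restr (T f) = T f"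
  by (auto simp: restr_def T_out)

lemma T_diff: "T (\<lambda>x. f x - g x) = (\<lambda>x. T f x - T g x)"
  by (rule ext) (simp add: T_eq sum_subtractf algebra_simps)

lemma T_add: "T (\<lambda>x. f x + g x) = (\<lambda>x. T f x + T g x)"
  by (rule ext) (simp add: T_eq sum.distrib algebra_simps)

lemma T_scale: "T (\<lambda>x. c * f x) = (\<lambda>x. c * T f x)"
  by (rule ext) (simp add: T_eq sum_distrib_left mult.left_commute)

lemma T_div: "T (\<lambda>x. f x / c) = (\<lambda>x. T f x / c)"
  by (rule ext) (simp add: T_eq sum_divide_distrib mult.commute)

lemma vinner_diff_left: "vinner (\<lambda>x. u x - w x) v = vinner u v - vinner w v"
  by (simp add: vinner_def sum_subtractf algebra_simps)

lemma vinner_add_left: "vinner (\<lambda>x. u x + w x) v = vinner u v + vinner w v"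
  by (simp add: vinner_def sum.distrib algebra_simps)

lemma vinner_diff_right: "vinner u (\<lambda>x. v x - w x) = vinner u v - vinner u w"
  by (simp add: vinner_def sum_subtractf algebra_simps)

lemma vinner_scale_left: "vinner (\<lambda>x. c * u x) v = c * vinner u v"
  by (simp add: vinner_def sum_distrib_left algebra_simps)

lemma vinner_scale_right: "vinner u (\<lambda>x. c * v x) = cnj c * vinner u v"
  by (simp add: vinner_def sum_distrib_left algebra_simps)

lemma vinner_local_left: "(\<And>x. x \<in> V \<Longrightarrow> u x = w x) \<Longrightarrow> vinner u v = vinner w v"
  by (simp add: vinner_def)

lemma vinner_local_right: "(\<And>x. x \<in> V \<Longrightarrow> v x = w x) \<Longrightarrow> vinner u v = vinner u w"
  by (simp add: vinner_def)

lemma vinner_restr_left: "vinner (restr u) v = vinner u v"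
  by (rule vinner_local_left) (simp add: restr_def)

lemma vinner_restr_right: "vinner u (restr v) = vinner u v"
  by (rule vinner_local_right) (simp add: restr_def)

lemma vinner_div_left: "vinner (\<lambda>x. u x / c) v = vinner u v / c"
  by (simp add: vinner_def sum_divide_distrib)

lemma vinner_sum_left: "vinner (\<lambda>x. \<Sum>k\<in>K. c k * F k x) v = (\<Sum>k\<in>K. c k * vinner (F k) v)"
  unfolding vinner_def by (simp add: sum_distrib_right sum_distrib_left mult.assoc) (rule sum.swap)

lemma vinner_sum_right: "vinner u (\<lambda>x. \<Sum>k\<in>K. c k * F k x) = (\<Sum>k\<in>K. cnj (c k) * vinner u (F k))"
  unfolding vinner_def by (simp add: sum_distrib_right sum_distrib_left mult.assoc mult.left_commute) (rule sum.swap)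

lemma T_selfadjoint: "vinner (T u) v = vinner u (T v)"
proof -
  have r: "(\<Sum>y\<in>{y. A x y}. F y) = (\<Sum>y\<in>V. if A x y then F y else 0)" for x and F :: "nat \<Rightarrow> complex"
  proof -
    have "{y. A x y} = {y \<in> V. A x y}" by (auto dest: adj_in_V)
    then show ?thesis by (simp add: sum.inter_filter[OF finite_V])
  qed
  let ?s = "of_real (1 / sqrt (real d)) :: complex"
  have "vinner (T u) v = ?s * (\<Sum>x\<in>V. \<Sum>y\<in>V. if A x y then u y * cnj (v x) else 0)"
    unfolding vinner_def T_eq r by (simp add: sum_distrib_left sum_distrib_right algebra_simps if_distrib cong: if_cong)
  also have "\<dots> = ?s * (\<Sum>y\<in>V. \<Sum>x\<in>V. if A y x then u y * cnj (v x) else 0)"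
    by (subst sum.swap) (auto intro!: sum.cong dest: adj_sym)
  also have "\<dots> = vinner u (T v)"
    unfolding vinner_def T_eq r by (simp add: sum_distrib_left sum_distrib_right algebra_simps if_distrib cong: if_cong)
  finally show ?thesis .
qed

definition vnorm2 :: "(nat \<Rightarrow> complex) \<Rightarrow> real" where
  "vnorm2 u = (\<Sum>x\<in>V. (cmod (u x))^2)"

lemma vinner_self: "vinner u u = of_real (vnorm2 u)"
  unfolding vinner_def vnorm2_def of_real_sum by (rule sum.cong[OF refl]) (rule complex_norm_square[symmetric])

lemma vnorm2_nonneg: "vnorm2 u \<ge> 0"
  by (simp add: vnorm2_def sum_nonneg)

lemma vinner_Cauchy_Schwarz: "(cmod (vinner u v))^2 \<le> vnorm2 u * vnorm2 v"
proof -
  have "cmod (vinner u v) \<le> (\<Sum>x\<in>V. cmod (u x) * cmod (v x))"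
    unfolding vinner_def by (rule order_trans[OF norm_sum]) (simp add: norm_mult)
  then have "(cmod (vinner u v))^2 \<le> (\<Sum>x\<in>V. cmod (u x) * cmod (v x))^2"
    by (intro power_mono) auto
  also have "\<dots> \<le> vnorm2 u * vnorm2 v" unfolding vnorm2_def by (rule Cauchy_Schwarz_ineq_sum)
  finally show ?thesis .
qed

text \<open>\<open>cheb_op c n\<close> is \<open>P\<^sub>n(T)\<close> for the recurrence \<open>P\<^sub>0 = c\<close>, \<open>P\<^sub>1 = x\<close>,
  \<open>P\<^bsub>n+2\<^esub> = x P\<^bsub>n+1\<^esub> - P\<^sub>n\<close>: \<open>D_op\<close> gives the Dickson polynomials \<open>D\<^sub>n(T)\<close> and \<open>U_op\<close>
  the Chebyshev polynomials \<open>U\<^sub>n(T/2)\<close>; all of them vanish off \<open>V\<close>.\<close>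

fun cheb_op :: "real \<Rightarrow> nat \<Rightarrow> (nat \<Rightarrow> complex) \<Rightarrow> nat \<Rightarrow> complex" where
  "cheb_op c 0 f = (\<lambda>x. of_real c * restr f x)"
| "cheb_op c (Suc 0) f = T f"
| "cheb_op c (Suc (Suc n)) f = (\<lambda>x. T (cheb_op c (Suc n) f) x - cheb_op c n f x)"

lemma cheb_op_local: "(\<And>x. x \<in> V \<Longrightarrow> f x = g x) \<Longrightarrow> cheb_op c n f = cheb_op c n g"
proof (induction c n f rule: cheb_op.induct)
  case (1 c f) then show ?case by (intro ext) (simp add: restr_def)
next
  case (2 c f)
  have "T f = T g" by (rule T_local) (use 2 in blast)
  then show ?case by simp
next
  case (3 c n f)
  have e1: "cheb_op c (Suc n) f = cheb_op c (Suc n) g" using 3 by blast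
  have e2: "cheb_op c n f = cheb_op c n g" using 3 by blast
  show ?case by (simp only: cheb_op.simps e1 e2)
qed

lemma cheb_op_restr: "cheb_op c n (restr f) = cheb_op c n f" by (rule cheb_op_local) (simp add: restr_def)

lemma cheb_op_diff: "cheb_op c n (\<lambda>x. f x - g x) = (\<lambda>x. cheb_op c n f x - cheb_op c n g x)"
proof (induction c n f rule: cheb_op.induct)
  case (1 c f) then show ?case by (intro ext) (simp add: restr_def right_diff_distrib)
next
  case (2 c f) then show ?case by (simp add: T_diff)
next
  case (3 c n f)
  show ?case using 3 by (intro ext) (simp add: T_diff)
qed

lemma cheb_op_scale: "cheb_op c n (\<lambda>x. k * f x) = (\<lambda>x. k * cheb_op c n f x)"
proof (induction c n f rule: cheb_op.induct)
  case (1 c f) then show ?case by (intro ext) (simp add: restr_def)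
next
  case (2 c f) then show ?case by (simp add: T_scale)
next
  case (3 c n f)
  show ?case using 3 by (intro ext) (simp add: T_scale right_diff_distrib)
qed

lemma cheb_op_T: "cheb_op c n (T f) = T (cheb_op c n f)"
proof (induction c n f rule: cheb_op.induct)
  case (1 c f) then show ?case by (simp add: restr_T T_scale T_restr)
next
  case (2 c f) then show ?case by simp
next
  case (3 c n f) then show ?case by (simp add: T_diff)
qed

lemma cheb_op_selfadjoint: "vinner (cheb_op c n u) v = vinner u (cheb_op c n v)"
proof (induction c n u arbitrary: v rule: cheb_op.induct)
  case (1 c f) then show ?case by (simp add: vinner_scale_left vinner_scale_right vinner_restr_left vinner_restr_right)
next
  case (2 c f) then show ?case by (simp add: T_selfadjoint)
next
  case (3 c n f)
  show ?case by (simp add: vinner_diff_left vinner_diff_right 3 T_selfadjoint cheb_op_T)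
qed

abbreviation "D_op \<equiv> cheb_op 2"
abbreviation "U_op \<equiv> cheb_op 1"

lemma D_op_T: "T (D_op k f) = (\<lambda>x. D_op (Suc k) f x + D_op (nat_dist k 1) f x)"
proof (cases k)
  case 0 then show ?thesis by (auto simp: nat_dist_def T_scale T_restr)
next
  case (Suc k') then show ?thesis by (auto simp: nat_dist_def)
qed

lemma D_op_mult: "D_op a (D_op b f) = (\<lambda>x. D_op (a + b) f x + D_op (nat_dist a b) f x)"
proof (induction b arbitrary: a rule: less_induct)
  case (less b)
  consider "b = 0" | "b = 1" | b' where "b = Suc (Suc b')" by (metis One_nat_def not0_implies_Suc)
  then show ?case
  proof cases
    case 1 then show ?thesis by (auto simp: nat_dist_def cheb_op_scale cheb_op_restr)
  next
    case 2 then show ?thesis using D_op_T[of a f] by (simp add: cheb_op_T)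
  next
    case 3
    have "D_op a (D_op b f) = (\<lambda>x. T (D_op a (D_op (Suc b') f)) x - D_op a (D_op b' f) x)"
      using 3 by (simp add: cheb_op_diff cheb_op_T)
    also have "\<dots> = (\<lambda>x. T (D_op (a + Suc b') f) x + T (D_op (nat_dist a (Suc b')) f) x
          - D_op (a + b') f x - D_op (nat_dist a b') f x)"
      using less.IH[of "Suc b'" a] less.IH[of b' a] 3 by (simp add: T_add diff_diff_eq)
    also have "\<dots> = (\<lambda>x. D_op (a + b) f x + D_op (a + b') f x
          + D_op (Suc (nat_dist a (Suc b'))) f x + D_op (nat_dist (nat_dist a (Suc b')) 1) f x
          - D_op (a + b') f x - D_op (nat_dist a b') f x)"
    proof -
      have e1: "T (D_op (a + Suc b') f) = (\<lambda>x. D_op (a + b) f x + D_op (a + b') f x)"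
        using D_op_T[of "a + Suc b'" f] 3 by (simp add: nat_dist_def del: cheb_op.simps)
      have e2: "T (D_op (nat_dist a (Suc b')) f) = (\<lambda>x. D_op (Suc (nat_dist a (Suc b'))) f x + D_op (nat_dist (nat_dist a (Suc b')) 1) f x)"
        by (rule D_op_T)
      show ?thesis by (simp only: e1 e2) (simp add: algebra_simps del: cheb_op.simps)
    qed
    finally show ?thesis using nat_dist_Suc_cases[of a b'] 3 by (auto simp del: cheb_op.simps)
  qed
qed

lemma D_op_eigen:
  assumes ev: "\<And>x. x \<in> V \<Longrightarrow> T \<phi> x = \<mu> * \<phi> x"
  shows "x \<in> V \<Longrightarrow> D_op n \<phi> x = dickson \<mu> n * \<phi> x"
proof (induction n arbitrary: x rule: less_induct)
  case (less n)
  consider "n = 0" | "n = 1" | n' where "n = Suc (Suc n')" by (metis One_nat_def not0_implies_Suc)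
  then show ?case
  proof cases
    case 1 then show ?thesis using less by (simp add: restr_def)
  next
    case 2 then show ?thesis using less ev by simp
  next
    case 3
    have "T (D_op (Suc n') \<phi>) = T (\<lambda>x. dickson \<mu> (Suc n') * \<phi> x)"
      by (rule T_local) (use less 3 in auto)
    also have "\<dots> = (\<lambda>x. dickson \<mu> (Suc n') * T \<phi> x)" by (rule T_scale)
    finally have t: "T (D_op (Suc n') \<phi>) x = dickson \<mu> (Suc n') * T \<phi> x" by simp
    have i0: "D_op n' \<phi> x = dickson \<mu> n' * \<phi> x" using less.IH[of n' x] less.prems 3 by simp
    show ?thesis using t i0 ev[OF less.prems] 3 by (simp add: algebra_simps)
  qed
qed

text \<open>\<open>S_op\<close> does not vanish off \<open>V\<close> (there \<open>nb_walks A x 0 = {[x]}\<close>), so it is restricted to \<open>V\<close>.\<close>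

definition S_V :: "nat \<Rightarrow> (nat \<Rightarrow> complex) \<Rightarrow> nat \<Rightarrow> complex" where
  "S_V n f = restr (S_op d A n f)"

lemma S_op_eq: "S_op d A n f x = of_real (real d powr (- real n / 2)) * walk_sum f x n"
  by (simp add: S_op_def walk_sum_def)

lemma S_V_0: "S_V 0 f = U_op 0 f"
  using d_ge_1 by (intro ext) (simp add: S_V_def S_op_eq walk_sum_0 restr_def)

lemma S_V_1: "S_V 1 f = T f"
proof (rule ext)
  fix x
  have e: "real d powr (- real (Suc 0) / 2) = 1 / sqrt (real d)"
    using d_pos by (simp add: powr_minus_divide powr_half_sqrt)
  show "S_V 1 f x = T f x"
  proof (cases "x \<in> V")
    case True
    have "S_V 1 f x = of_real (real d powr (- real (1::nat) / 2)) * walk_sum f x 1"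
      using True by (simp only: S_V_def restr_def S_op_eq if_True)
    also have "\<dots> = T f x" unfolding One_nat_def e T_eq walk_sum_1 ..
    finally show ?thesis .
  qed (simp add: S_V_def restr_def T_out)
qed

lemma T_S_V:
  "T (S_V (Suc n) f)
     = (\<lambda>x. S_V (Suc (Suc n)) f x + of_real (if n = 0 then (real d + 1) / real d else 1) * S_V n f x)"
proof (rule ext)
  fix x
  let ?w = "\<lambda>k. real d powr (- real k / 2)"
  let ?c = "if n = 0 then d + 1 else d"
  show "T (S_V (Suc n) f) x
      = S_V (Suc (Suc n)) f x + of_real (if n = 0 then (real d + 1) / real d else 1) * S_V n f x"
  proof (cases "x \<in> V")
    case False
    then show ?thesis by (simp add: T_out S_V_def restr_def)
  next
    case True
    have "(\<Sum>y\<in>{y. A x y}. S_V (Suc n) f y) = (\<Sum>y\<in>{y. A x y}. of_real (?w (Suc n)) * walk_sum f y (Suc n))"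
      by (rule sum.cong) (auto simp: S_V_def restr_def S_op_eq dest: adj_in_V)
    then have "T (S_V (Suc n) f) x
        = of_real (1 / sqrt (real d) * ?w (Suc n)) * (\<Sum>y\<in>{y. A x y}. walk_sum f y (Suc n))"
      unfolding T_eq by (simp add: sum_distrib_left mult.assoc)
    also have "\<dots> = of_real (?w (Suc (Suc n))) * walk_sum f x (Suc (Suc n))
        + of_real (?w (Suc (Suc n)) * real ?c) * walk_sum f x n"
      using powr_neg_half_Suc[OF d_pos, of "Suc n"]
      by (simp add: walk_sum_recurrence[OF True] algebra_simps)
    also have "?w (Suc (Suc n)) * real ?c = (if n = 0 then (real d + 1) / real d else 1) * ?w n"
      using powr_neg_half_Suc_Suc[OF d_pos, of n] by (simp add: field_simps)
    finally show ?thesis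
      using True by (simp add: S_V_def restr_def S_op_eq)
  qed
qed

lemma S_V_recurrence:
  "S_V (Suc (Suc n)) f
     = (\<lambda>x. T (S_V (Suc n) f) x - of_real (if n = 0 then (real d + 1) / real d else 1) * S_V n f x)"
  by (simp add: T_S_V)

lemma S_V_eq_U_op: "S_V (Suc (Suc n)) f = (\<lambda>x. U_op (Suc (Suc n)) f x - U_op n f x / of_nat d)"
proof (induction n rule: less_induct)
  case (less n)
  have dn: "(of_nat d :: complex) \<noteq> 0" using d_ge_1 by simp
  consider "n = 0" | "n = 1" | n' where "n = Suc (Suc n')" by (metis One_nat_def not0_implies_Suc)
  then show ?case
  proof cases
    case 1
    show ?thesis unfolding 1 S_V_recurrence S_V_1[unfolded One_nat_def] S_V_0
      using dn by (intro ext) (simp add: field_simps of_real_divide)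
  next
    case 2
    have "S_V (Suc (Suc 0)) f = (\<lambda>x. U_op (Suc (Suc 0)) f x - U_op 0 f x / of_nat d)"
      using less[of 0] 2 by simp
    then show ?thesis unfolding 2 S_V_recurrence[of 1] using S_V_1[unfolded One_nat_def]
      by (intro ext) (simp add: T_diff T_div T_scale T_restr)
  next
    case 3
    have i1: "S_V (Suc (Suc (Suc n'))) f = (\<lambda>x. U_op (Suc (Suc (Suc n'))) f x - U_op (Suc n') f x / of_nat d)"
      using less[of "Suc n'"] 3 by simp
    have i0: "S_V (Suc (Suc n')) f = (\<lambda>x. U_op (Suc (Suc n')) f x - U_op n' f x / of_nat d)"
      using less[of n'] 3 by simp
    show ?thesis unfolding 3 S_V_recurrence[of "Suc (Suc n')"] i1 i0
      by (intro ext) (simp add: T_diff T_div diff_divide_distrib)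
  qed
qed

lemma D_op_eq_U_op: "D_op (Suc (Suc n)) f = (\<lambda>x. U_op (Suc (Suc n)) f x - U_op n f x)"
proof (induction n rule: less_induct)
  case (less n)
  consider "n = 0" | "n = 1" | n' where "n = Suc (Suc n')" by (metis One_nat_def not0_implies_Suc)
  then show ?case
  proof cases
    case 1 then show ?thesis by (intro ext) (simp add: T_scale T_restr)
  next
    case 2 then show ?thesis by (intro ext) (simp add: T_scale T_restr T_diff)
  next
    case 3
    have i1: "D_op (Suc (Suc (Suc n'))) f = (\<lambda>x. U_op (Suc (Suc (Suc n'))) f x - U_op (Suc n') f x)"
      using less[of "Suc n'"] 3 by simp
    have i0: "D_op (Suc (Suc n')) f = (\<lambda>x. U_op (Suc (Suc n')) f x - U_op n' f x)"
      using less[of n'] 3 by simp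
    have "D_op (Suc (Suc n)) f = (\<lambda>x. T (D_op (Suc (Suc (Suc n'))) f) x - D_op (Suc (Suc n')) f x)"
      using 3 by (simp del: cheb_op.simps) (simp only: cheb_op.simps)
    also have "\<dots> = (\<lambda>x. U_op (Suc (Suc n)) f x - U_op n f x)"
      unfolding i1 i0 3 by (intro ext) (simp add: T_diff T_scale)
    finally show ?thesis .
  qed
qed

lemma U_op_form_bound:
  assumes B: "B \<ge> 0" and rho: "\<rho> > 0" and rd: "1 / real d \<le> \<rho>^2"
    and S: "\<And>j. j \<le> N \<Longrightarrow> cmod (vinner (S_V j g) g) \<le> B * \<rho>^j"
  shows "n \<le> N \<Longrightarrow> cmod (vinner (U_op n g) g) \<le> (n + 1) * B * \<rho>^n"
proof (induction n rule: less_induct)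
  case (less n)
  consider "n = 0" | "n = 1" | n' where "n = Suc (Suc n')" by (metis One_nat_def not0_implies_Suc)
  then show ?case
  proof cases
    case 1 then show ?thesis using S[of 0] less.prems by (simp add: S_V_0)
  next
    case 2
    have "0 \<le> B * \<rho>" using B rho by simp
    then show ?thesis using S[of 1] less.prems S_V_1 2 by simp
  next
    case 3
    have ih: "cmod (vinner (U_op n' g) g) \<le> (n' + 1) * B * \<rho>^n'" using less.IH[of n'] less.prems 3 by (simp add: add.commute)
    have eq: "U_op n g = (\<lambda>x. S_V n g x + U_op n' g x / of_nat d)"
      unfolding 3 S_V_eq_U_op by (rule ext) (simp del: cheb_op.simps)
    have "cmod (vinner (U_op n g) g) \<le> cmod (vinner (S_V n g) g) + cmod (vinner (U_op n' g) g) / real d"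
      unfolding eq vinner_add_left vinner_div_left by (rule order_trans[OF norm_triangle_ineq]) (simp add: norm_divide)
    also have "\<dots> \<le> B * \<rho>^n + (n' + 1) * B * \<rho>^n' * (1 / real d)"
      using S[of n] less.prems ih d_pos by (intro add_mono) (auto simp: divide_right_mono)
    also have "(n' + 1) * B * \<rho>^n' * (1 / real d) \<le> (n' + 1) * B * \<rho>^n' * \<rho>^2"
      using rd B rho by (intro mult_left_mono) auto
    also have "(n' + 1) * B * \<rho>^n' * \<rho>^2 = (n' + 1) * B * \<rho>^n" using 3 by (simp add: power_add[symmetric])
    finally have f0: "cmod (vinner (U_op n g) g) \<le> (real n' + 2) * (B * \<rho>^n)" by (simp add: algebra_simps)
    moreover have "(real n' + 2) * (B * \<rho>^n) \<le> (real n + 1) * (B * \<rho>^n)" using 3 B rho by (intro mult_right_mono) auto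
    ultimately show ?thesis by (simp add: mult.assoc)
  qed
qed

lemma D_op_form_bound:
  assumes B: "B \<ge> 0" and rho: "\<rho> > 0" and rd: "1 / real d \<le> \<rho>^2"
    and S: "\<And>j. j \<le> N \<Longrightarrow> cmod (vinner (S_V j g) g) \<le> B * \<rho>^j"
    and n: "1 \<le> n" "n \<le> N"
  shows "cmod (vinner (D_op n g) g) \<le> (real d + 1) * (n + 1) * B * \<rho>^n"
proof -
  have U: "\<And>k. k \<le> N \<Longrightarrow> cmod (vinner (U_op k g) g) \<le> (k + 1) * B * \<rho>^k"
    using U_op_form_bound[of B \<rho> N g] B rho rd S by blast
  consider "n = 1" | n' where "n = Suc (Suc n')" using n by (metis One_nat_def not0_implies_Suc not_one_le_zero)
  then show ?thesis
  proof cases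
    case 1
    have "cmod (vinner (D_op n g) g) = cmod (vinner (U_op 1 g) g)" using 1 by simp
    also have "\<dots> \<le> (1 + 1) * B * \<rho>^1" using U[of 1] n by simp
    also have "\<dots> = 1 * (2 * B * \<rho>)" by simp
    also have "\<dots> \<le> (real d + 1) * (2 * B * \<rho>)" by (rule mult_right_mono) (use B rho in auto)
    also have "\<dots> = (real d + 1) * (n + 1) * B * \<rho>^n" using 1 by simp
    finally show ?thesis .
  next
    case 2
    have "cmod (vinner (D_op n g) g) = cmod (vinner (U_op n g) g - vinner (U_op n' g) g)"
      unfolding 2 D_op_eq_U_op vinner_diff_left ..
    also have "\<dots> \<le> cmod (vinner (U_op n g) g) + cmod (vinner (U_op n' g) g)" by (rule norm_triangle_ineq4)
    also have "\<dots> \<le> (n + 1) * B * \<rho>^n + (n' + 1) * B * \<rho>^n'"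
    proof (rule add_mono)
      show "cmod (vinner (U_op n g) g) \<le> (n + 1) * B * \<rho>^n" using U[of n] n by (simp add: add.commute)
      show "cmod (vinner (U_op n' g) g) \<le> (n' + 1) * B * \<rho>^n'" using U[of n'] n 2 by (simp add: add.commute)
    qed
    also have "(n' + 1) * B * \<rho>^n' \<le> (n + 1) * B * (real d * \<rho>^n)"
    proof -
      have "\<rho>^n' \<le> real d * \<rho>^n"
      proof -
        have "1 \<le> real d * \<rho>^2" using rd d_pos by (simp add: field_simps)
        then have "\<rho>^n' * 1 \<le> \<rho>^n' * (real d * \<rho>^2)" using rho by (intro mult_left_mono) auto
        then show ?thesis using 2 by (simp add: power_add[symmetric] algebra_simps)
      qed
      then show ?thesis using 2 B rho by (intro mult_mono) auto
    qed
    finally show ?thesis by (simp add: algebra_simps)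
  qed
qed

section \<open>Concentration of eigenfunctions\<close>

lemma D_op_form_multiples_bound:
  assumes small: "\<And>n. n0 \<le> n \<Longrightarrow> n \<le> 4 * m * n0 \<Longrightarrow> cmod (vinner (D_op n g) g) \<le> 1 / (2 * real m)"
    and g: "vnorm2 g \<le> 1" and k: "1 \<le> k" "k \<le> 2 * m" and l: "1 \<le> l" "l \<le> 2 * m"
  shows "cmod (vinner (D_op (k * n0) g) (D_op (l * n0) g)) \<le> 1 / real m + (if k = l then 2 else 0)"
proof -
  have eq: "vinner (D_op (k * n0) g) (D_op (l * n0) g)
      = vinner (D_op (l * n0 + k * n0) g) g + vinner (D_op (nat_dist (l * n0) (k * n0)) g) g"
    unfolding cheb_op_selfadjoint[symmetric] D_op_mult vinner_add_left ..
  have sum: "cmod (vinner (D_op (l * n0 + k * n0) g) g) \<le> 1 / (2 * real m)"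
  proof (rule small)
    have "l * n0 + k * n0 \<le> (4 * m) * n0"
      using k l by (simp flip: add_mult_distrib)
    then show "l * n0 + k * n0 \<le> 4 * m * n0" by simp
  qed (use l in \<open>simp add: trans_le_add1\<close>)
  have diff: "cmod (vinner (D_op (nat_dist (l * n0) (k * n0)) g) g)
      \<le> 1 / (2 * real m) + (if k = l then 2 else 0)"
  proof (cases "k = l")
    case True
    have "vinner (D_op (nat_dist (l * n0) (k * n0)) g) g = of_real (2 * vnorm2 g)"
      using True by (simp add: nat_dist_def vinner_scale_left vinner_restr_left vinner_self)
    then have "cmod (vinner (D_op (nat_dist (l * n0) (k * n0)) g) g) = 2 * vnorm2 g"
      using vnorm2_nonneg[of g] by simp
    moreover have "0 \<le> 1 / (2 * real m)" "(if k = l then 2 else 0) = (2::real)"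
      using True by simp_all
    ultimately show ?thesis using g by linarith
  next
    case False
    have "cmod (vinner (D_op (nat_dist (l * n0) (k * n0)) g) g) \<le> 1 / (2 * real m)"
    proof (rule small)
      show "n0 \<le> nat_dist (l * n0) (k * n0)"
        using nat_dist_ge_1[OF False] by (simp add: nat_dist_mult)
      have "nat_dist l k * n0 \<le> (4 * m) * n0"
        using nat_dist_le_add[of l k] k l by (intro mult_right_mono) auto
      then show "nat_dist (l * n0) (k * n0) \<le> 4 * m * n0" by (simp add: nat_dist_mult)
    qed
    then show ?thesis using False by simp
  qed
  have "1 / (2 * real m) + 1 / (2 * real m) = 1 / real m"
    by simp
  then show ?thesis
    unfolding eq using sum diff norm_triangle_ineq[of "vinner (D_op (l * n0 + k * n0) g) g"
        "vinner (D_op (nat_dist (l * n0) (k * n0)) g) g"]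
    by linarith
qed

text \<open>The test function \<open>P = \<Sum>\<^sub>k e\<^sub>k D\<^bsub>k n\<^sub>0\<^esub>(T) g\<close>, with \<open>e\<^sub>k\<close> the eigenvalue of \<open>D\<^bsub>k n\<^sub>0\<^esub>(T)\<close> at \<open>\<phi>\<close>,
  satisfies \<open>\<langle>P, \<phi>\<rangle> = Q a\<close> for \<open>Q = \<Sum>\<^sub>k |e\<^sub>k|\<^sup>2\<close>, while the near-orthogonality of the \<open>D\<^bsub>k n\<^sub>0\<^esub>(T) g\<close>
  gives \<open>\<parallel>P\<parallel>\<^sup>2 \<le> 4 Q\<close>. Hence \<open>Q a\<^sup>2 \<le> 4\<close>, and \<open>e\<^bsub>2k\<^esub> = e\<^sub>k\<^sup>2 - 2\<close> forces \<open>Q \<ge> 7 m / 8\<close>.\<close>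

lemma mass_bound:
  assumes ev: "\<And>x. x \<in> V \<Longrightarrow> T \<phi> x = \<mu> * \<phi> x" and n\<phi>: "vnorm2 \<phi> = 1"
    and g\<phi>: "vinner g \<phi> = of_real a" and gg: "vnorm2 g = a" and a0: "0 \<le> a" and a1: "a \<le> 1"
    and m1: "1 \<le> m"
    and small: "\<And>n. n0 \<le> n \<Longrightarrow> n \<le> 4 * m * n0 \<Longrightarrow> cmod (vinner (D_op n g) g) \<le> 1 / (2 * real m)"
  shows "7 * real m * a^2 \<le> 32"
proof -
  define K where "K = {1..2*m}"
  define e where "e k = dickson \<mu> (k * n0)" for k
  define Q where "Q = (\<Sum>k\<in>K. (cmod (e k))^2)"
  define P where "P = (\<lambda>x. \<Sum>k\<in>K. e k * D_op (k * n0) g x)"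
  have Qm: "7 * real m / 8 \<le> Q"
    unfolding Q_def K_def
    by (rule sum_sq_lower_of_doubling) (simp add: e_def dickson_double mult.assoc)
  have "vinner P \<phi> = (\<Sum>k\<in>K. e k * vinner g (D_op (k * n0) \<phi>))"
    unfolding P_def vinner_sum_left cheb_op_selfadjoint ..
  also have "\<dots> = (\<Sum>k\<in>K. e k * cnj (e k) * of_real a)"
  proof (intro sum.cong refl)
    fix k
    have "vinner g (D_op (k * n0) \<phi>) = vinner g (\<lambda>x. e k * \<phi> x)"
      by (rule vinner_local_right) (simp add: e_def D_op_eigen[OF ev])
    then show "e k * vinner g (D_op (k * n0) \<phi>) = e k * cnj (e k) * of_real a"
      by (simp add: vinner_scale_right g\<phi>)
  qed
  also have "\<dots> = (\<Sum>k\<in>K. of_real ((cmod (e k))^2) * of_real a)"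
    by (intro sum.cong refl) (simp only: complex_norm_square)
  also have "\<dots> = of_real (Q * a)"
    by (simp add: Q_def of_real_sum sum_distrib_right)
  finally have "cmod (vinner P \<phi>) = Q * a"
    by (simp only: norm_of_real) (use a0 in \<open>simp add: Q_def sum_nonneg\<close>)
  then have lower: "(Q * a)^2 \<le> vnorm2 P"
    using vinner_Cauchy_Schwarz[of P \<phi>] n\<phi> by simp
  have "vnorm2 P = cmod (vinner P P)"
    using vnorm2_nonneg[of P] by (simp add: vinner_self)
  also have "vinner P P
      = (\<Sum>k\<in>K. e k * (\<Sum>l\<in>K. cnj (e l) * vinner (D_op (k * n0) g) (D_op (l * n0) g)))"
    unfolding P_def vinner_sum_left vinner_sum_right ..
  also have "\<dots> = (\<Sum>k\<in>K. \<Sum>l\<in>K. e k * cnj (e l) * vinner (D_op (k * n0) g) (D_op (l * n0) g))"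
    by (simp add: sum_distrib_left mult.assoc)
  also have "cmod (\<Sum>k\<in>K. \<Sum>l\<in>K. e k * cnj (e l) * vinner (D_op (k * n0) g) (D_op (l * n0) g))
      \<le> 4 * Q"
    unfolding Q_def
  proof (rule norm_quadratic_form_le)
    show "finite K" "0 \<le> 1 / real m" "real (card K) * (1 / real m) \<le> 2"
      using m1 by (auto simp: K_def)
    fix k l assume "k \<in> K" "l \<in> K"
    then show "cmod (vinner (D_op (k * n0) g) (D_op (l * n0) g)) \<le> 1 / real m + (if k = l then 2 else 0)"
      using gg a1 by (intro D_op_form_multiples_bound[OF small]) (auto simp: K_def)
  qed
  finally have upper: "vnorm2 P \<le> 4 * Q" .
  have "Q * (Q * a^2) \<le> Q * 4"
    using lower upper by (simp add: power2_eq_square algebra_simps)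
  then have "Q * a^2 \<le> 4"
    using Qm m1 by simp
  moreover have "7 * real m / 8 * a^2 \<le> Q * a^2"
    using Qm by (intro mult_right_mono) auto
  ultimately show ?thesis by simp
qed

lemma S_op_scale: "S_op d A n (\<lambda>x. c * f x) = (\<lambda>x. c * S_op d A n f x)"
  by (rule ext) (simp add: S_op_def sum_distrib_left mult.left_commute)

lemma S_op_pointwise_bound:
  assumes p: "1 \<le> p" and f: "lp_norm V (ereal p) f \<le> 1" and x: "x \<in> V"
  shows "cmod (S_op d A n f x) \<le> real d powr (- real n / 2) * real (card (nb_walks A x n))"
proof -
  have fy: "cmod (f y) \<le> 1" if "y \<in> V" for y
    using lp_norm_ge_point[OF finite_V that, of "ereal p" f] f p by (simp add: lp_exponent_def)
  have "cmod (\<Sum>\<gamma>\<in>nb_walks A x n. f (last \<gamma>)) \<le> (\<Sum>\<gamma>\<in>nb_walks A x n. cmod (f (last \<gamma>)))"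
    by (rule norm_sum)
  also have "\<dots> \<le> (\<Sum>\<gamma>\<in>nb_walks A x n. 1)"
    by (rule sum_mono) (use fy nb_walks_last_in_V[OF x] in auto)
  finally have "cmod (\<Sum>\<gamma>\<in>nb_walks A x n. f (last \<gamma>)) \<le> real (card (nb_walks A x n))" by simp
  then show ?thesis unfolding S_op_def norm_mult by (simp add: mult_left_mono)
qed

lemma bdd_above_S_op:
  assumes p: "1 \<le> p" and q: "lp_exponent q"
  shows "bdd_above {lp_norm V q (S_op d A n f) | f. lp_norm V (ereal p) f \<le> 1}"
proof -
  define K where "K = real d powr (- real n / 2) * (\<Sum>x\<in>V. real (card (nb_walks A x n)))"
  have K0: "K \<ge> 0" unfolding K_def by (simp add: sum_nonneg)
  show ?thesis unfolding bdd_above_def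
  proof (intro exI ballI)
    fix y assume "y \<in> {lp_norm V q (S_op d A n f) | f. lp_norm V (ereal p) f \<le> 1}"
    then obtain f where y: "y = lp_norm V q (S_op d A n f)" and f: "lp_norm V (ereal p) f \<le> 1" by blast
    have "lp_norm V q (S_op d A n f) \<le> (real (card V) + 1) * K"
    proof (rule lp_norm_le_const[OF finite_V q K0])
      fix x assume x: "x \<in> V"
      have "cmod (S_op d A n f x) \<le> real d powr (- real n / 2) * real (card (nb_walks A x n))"
        by (rule S_op_pointwise_bound[OF p f x])
      also have "\<dots> \<le> K" unfolding K_def
        by (rule mult_left_mono, rule member_le_sum) (use x finite_V in auto)
      finally show "cmod (S_op d A n f x) \<le> K" .
    qed
    then show "y \<le> (real (card V) + 1) * K" using y by simp
  qed
qed

lemma lp_norm_S_op_le_op_norm: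
  assumes p: "1 \<le> p" and q: "lp_exponent q" and f: "lp_norm V (ereal p) f \<le> 1"
  shows "lp_norm V q (S_op d A n f) \<le> op_norm V (ereal p) q (S_op d A n)"
  unfolding op_norm_def by (rule cSup_upper) (use f bdd_above_S_op[OF p q] in auto)

lemma lp_norm_S_op_le:
  assumes p: "1 \<le> p" and q: "lp_exponent q" and s: "lp_norm V (ereal p) g > 0"
  shows "lp_norm V q (S_op d A n g) \<le> op_norm V (ereal p) q (S_op d A n) * lp_norm V (ereal p) g"
proof -
  let ?s = "lp_norm V (ereal p) g"
  define h where "h = (\<lambda>x. of_real (1 / ?s) * g x)"
  have gp: "lp_exponent (ereal p)" using p by (simp add: lp_exponent_def)
  have "lp_norm V (ereal p) h = (1 / ?s) * ?s" unfolding h_def by (rule lp_norm_scale[OF finite_V gp]) (use s in simp)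
  then have "lp_norm V (ereal p) h = 1" using s by simp
  then have "lp_norm V q (S_op d A n h) \<le> op_norm V (ereal p) q (S_op d A n)" using lp_norm_S_op_le_op_norm[OF p q] by simp
  moreover have "lp_norm V q (S_op d A n h) = (1 / ?s) * lp_norm V q (S_op d A n g)"
    unfolding h_def S_op_scale by (rule lp_norm_scale[OF finite_V q]) (use s in simp)
  ultimately show ?thesis using s by (simp add: field_simps)
qed

lemma op_norm_S_op_lower:
  assumes p: "1 \<le> p" and q: "lp_exponent q" and y: "y \<in> V"
  shows "real d powr (- real N / 2) \<le> op_norm V (ereal p) q (S_op d A N)"
proof -
  obtain x \<gamma> where x: "x \<in> V" and g: "\<gamma> \<in> nb_walks A x N" and l: "last \<gamma> = y"
    using nb_walk_ending_at[OF y] by blast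
  define \<delta> where "\<delta> = (\<lambda>z. if z = y then (1::complex) else 0)"
  have "(\<Sum>z\<in>V. cmod (\<delta> z) powr p) = (\<Sum>z\<in>V. if z = y then 1 else 0)"
    by (rule sum.cong) (use p in \<open>auto simp: \<delta>_def\<close>)
  also have "\<dots> = 1" using y finite_V by simp
  finally have "lp_norm V (ereal p) \<delta> = 1" by (simp add: lp_norm_finite)
  then have le: "lp_norm V q (S_op d A N \<delta>) \<le> op_norm V (ereal p) q (S_op d A N)"
    using lp_norm_S_op_le_op_norm[OF p q] by simp
  have "(\<Sum>\<gamma>\<in>nb_walks A x N. \<delta> (last \<gamma>)) = of_nat (card {\<gamma> \<in> nb_walks A x N. last \<gamma> = y})"
    by (simp add: \<delta>_def sum.If_cases[OF finite_nb_walks] Int_def conj_commute)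
  moreover have "card {\<gamma> \<in> nb_walks A x N. last \<gamma> = y} \<ge> 1"
  proof -
    have "{\<gamma> \<in> nb_walks A x N. last \<gamma> = y} \<noteq> {}" using g l by blast
    moreover have "finite {\<gamma> \<in> nb_walks A x N. last \<gamma> = y}" using finite_nb_walks by simp
    ultimately show ?thesis by (simp add: Suc_le_eq card_gt_0_iff)
  qed
  ultimately have "cmod (S_op d A N \<delta> x) = real d powr (- real N / 2) * real (card {\<gamma> \<in> nb_walks A x N. last \<gamma> = y})"
    and c1: "1 \<le> real (card {\<gamma> \<in> nb_walks A x N. last \<gamma> = y})"
    unfolding S_op_def by (simp_all add: norm_mult)
  moreover have "real d powr (- real N / 2) * 1 \<le> real d powr (- real N / 2) * real (card {\<gamma> \<in> nb_walks A x N. last \<gamma> = y})"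
    by (rule mult_left_mono[OF c1]) simp
  ultimately have "cmod (S_op d A N \<delta> x) \<ge> real d powr (- real N / 2)" by simp
  also have "cmod (S_op d A N \<delta> x) \<le> lp_norm V q (S_op d A N \<delta>)" by (rule lp_norm_ge_point[OF finite_V x q])
  finally show ?thesis using le by simp
qed

lemma laplace_eigenfunction_T_eigen:
  assumes "laplace_eigenfunction d V A \<phi>"
  obtains \<mu> where "\<And>x. x \<in> V \<Longrightarrow> T \<phi> x = \<mu> * \<phi> x"
proof -
  obtain ev where ev: "\<And>x. x \<in> V \<Longrightarrow> laplacian d A \<phi> x = ev * \<phi> x"
    using assms unfolding laplace_eigenfunction_def by blast
  define s where "s = sqrt (real d) / (real d + 1)"
  have s: "s > 0"
    unfolding s_def using d_pos by simp
  have "T \<phi> x = (ev + 1) / of_real s * \<phi> x" if "x \<in> V" for x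
  proof -
    have "of_real s * T \<phi> x - \<phi> x = ev * \<phi> x"
      using ev[OF that] by (simp add: laplacian_def T_def s_def)
    then show ?thesis
      using s by (simp add: field_simps)
  qed
  then show ?thesis by (rule that)
qed

lemma vnorm2_restrict_set:
  assumes "E \<subseteq> V"
  shows "vnorm2 (\<lambda>x. if x \<in> E then \<phi> x else 0) = (\<Sum>x\<in>E. (cmod (\<phi> x))^2)"
  using assms finite_V
  by (simp add: vnorm2_def if_distrib[of "\<lambda>z. (cmod z)^2"] sum.If_cases Int_absorb1 cong: if_cong)

lemma vinner_restrict_set:
  assumes "E \<subseteq> V"
  shows "vinner (\<lambda>x. if x \<in> E then \<phi> x else 0) \<phi> = of_real (\<Sum>x\<in>E. (cmod (\<phi> x))^2)"
proof -
  have "vinner (\<lambda>x. if x \<in> E then \<phi> x else 0) \<phi> = (\<Sum>x\<in>V. if x \<in> E then \<phi> x * cnj (\<phi> x) else 0)"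
    unfolding vinner_def by (rule sum.cong) auto
  also have "\<dots> = (\<Sum>x\<in>E. \<phi> x * cnj (\<phi> x))"
    using assms finite_V by (simp add: sum.If_cases Int_absorb1)
  finally show ?thesis
    by (simp only: of_real_sum complex_norm_square)
qed

lemma S_V_form_bound:
  assumes c: "conj_exponents p q" and p: "1 \<le> p" and g: "lp_norm V (ereal p) g > 0"
  shows "cmod (vinner (S_V j g) g) \<le> op_norm V (ereal p) q (S_op d A j) * (lp_norm V (ereal p) g)^2"
proof -
  have "cmod (vinner (S_V j g) g) \<le> (\<Sum>x\<in>V. cmod (S_op d A j g x) * cmod (g x))"
    unfolding S_V_def vinner_restr_left unfolding vinner_def by (auto intro!: order_trans[OF norm_sum] simp: norm_mult)
  also have "\<dots> \<le> lp_norm V q (S_op d A j g) * lp_norm V (ereal p) g"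
    by (rule lp_norm_Holder[OF finite_V c])
  also have "\<dots> \<le> (op_norm V (ereal p) q (S_op d A j) * lp_norm V (ereal p) g) * lp_norm V (ereal p) g"
    using conj_exponents_lp_exponent[OF c] g
    by (intro mult_right_mono lp_norm_S_op_le p) auto
  finally show ?thesis
    by (simp add: power2_eq_square mult.assoc)
qed

lemma D_op_form_geometric_bound:
  assumes B: "B \<ge> 0" and \<sigma>: "0 < \<sigma>" "\<sigma> < 1" and d: "1 / real d \<le> \<sigma>^4"
    and S: "\<And>j. j \<le> N \<Longrightarrow> cmod (vinner (S_V j g) g) \<le> B * \<sigma>^(2 * j)"
    and n: "1 \<le> n" "n \<le> N"
  shows "cmod (vinner (D_op n g) g) \<le> (real d + 1) * B * \<sigma>^n / (1 - \<sigma>)"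
proof -
  have "cmod (vinner (D_op n g) g) \<le> (real d + 1) * (n + 1) * B * (\<sigma>^2)^n"
    by (rule D_op_form_bound[OF B _ _ _ n]) (use \<sigma> d S in \<open>auto simp flip: power_mult\<close>)
  also have "\<dots> = (real d + 1) * B * ((real n + 1) * (\<sigma>^2)^n)"
    by (simp add: algebra_simps)
  also have "\<dots> \<le> (real d + 1) * B * (\<sigma>^n / (1 - \<sigma>))"
    using B by (intro mult_left_mono linear_times_geometric_le \<sigma>) auto
  finally show ?thesis by simp
qed

lemma concentration_bound:
  fixes \<phi> :: "nat \<Rightarrow> complex"
  assumes d2: "2 \<le> d" and al: "0 < \<alpha>" "\<alpha> \<le> 1/2" and C: "C > 0" and c: "conj_exponents p q"
    and p: "1 \<le> p" "p < 2"
    and hyp: "\<forall>n\<le>N. op_norm V (ereal p) q (S_op d A n) \<le> C * real d powr (- \<alpha> * real n)"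
    and eig: "laplace_eigenfunction d V A \<phi>" and n\<phi>: "(\<Sum>x\<in>V. (cmod (\<phi> x))^2) = 1"
    and E: "E \<subseteq> V" and mass: "(\<Sum>x\<in>E. (cmod (\<phi> x))^2) > \<epsilon>" and \<epsilon>: "\<epsilon> > 0"
    and m: "1 \<le> m" "5 / \<epsilon>^2 \<le> real m" and n0: "1 \<le> n0" "4 * m * n0 \<le> N"
  shows "(1 - real d powr (-\<alpha>/2)) / (2 * real m * (real d + 1) * C) * real d powr (\<alpha> * real n0 / 2)
         < real (card E) powr ((2 - p) / p)"
proof (rule ccontr)
  define \<sigma> where "\<sigma> = real d powr (-\<alpha>/2)"
  define M where "M = real (card E) powr ((2 - p) / p)"
  define a where "a = (\<Sum>x\<in>E. (cmod (\<phi> x))^2)"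
  define g where "g = (\<lambda>x. if x \<in> E then \<phi> x else 0)"
  assume "\<not> ?thesis"
  then have M_le: "M \<le> (1 - \<sigma>) / (2 * real m * (real d + 1) * C) * real d powr (\<alpha> * real n0 / 2)"
    by (simp add: M_def \<sigma>_def)
  obtain \<mu> where Teig: "\<And>x. x \<in> V \<Longrightarrow> T \<phi> x = \<mu> * \<phi> x"
    using laplace_eigenfunction_T_eigen[OF eig] by blast
  have a1: "a \<le> 1"
    unfolding a_def using n\<phi> E finite_V by (metis sum_mono2 zero_le_power2)
  obtain x where x: "x \<in> E" "\<phi> x \<noteq> 0"
    using mass \<epsilon> by (metis (no_types, lifting) norm_zero power_zero_numeral sum.neutral order_less_asym)
  have "lp_norm V (ereal p) g > 0"
    using x E p by (intro lp_norm_pos[OF finite_V]) (auto simp: g_def)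
  moreover have lp_M: "(lp_norm V (ereal p) g)^2 \<le> M"
    unfolding M_def g_def using a1 by (intro lp_norm_restrict_power2_le[OF finite_V E p]) (simp add: a_def)
  ultimately have S: "cmod (vinner (S_V j g) g) \<le> C * M * \<sigma>^(2 * j)" if "j \<le> N" for j
  proof -
    have "cmod (vinner (S_V j g) g) \<le> op_norm V (ereal p) q (S_op d A j) * (lp_norm V (ereal p) g)^2"
      by (rule S_V_form_bound[OF c p(1) \<open>lp_norm V (ereal p) g > 0\<close>])
    also have "\<dots> \<le> (C * real d powr (- \<alpha> * real j)) * M"
      using hyp that lp_M C by (intro mult_mono) auto
    also have "real d powr (- \<alpha> * real j) = \<sigma>^(2 * j)"
      unfolding \<sigma>_def using d_pos by (simp add: powr_power mult.commute)
    finally show ?thesis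
      by (simp add: mult_ac)
  qed
  have \<sigma>: "0 < \<sigma>" "\<sigma> < 1"
    unfolding \<sigma>_def using d2 al by (auto intro: powr_less_one)
  have "1 / real d = real d powr (-1)"
    using d_pos by (simp add: powr_minus_divide)
  also have "\<dots> \<le> real d powr (of_nat 4 * (-\<alpha>/2))"
    using d2 al by (intro powr_mono) auto
  also have "\<dots> = \<sigma>^4"
    unfolding \<sigma>_def using d_pos by (simp add: powr_power)
  finally have d_\<sigma>: "1 / real d \<le> \<sigma>^4" .
  have \<sigma>_n0: "\<sigma>^n0 * real d powr (\<alpha> * real n0 / 2) = 1"
    unfolding \<sigma>_def using d_pos by (simp add: powr_power flip: powr_add)
  have small: "cmod (vinner (D_op n g) g) \<le> 1 / (2 * real m)" if n: "n0 \<le> n" "n \<le> 4 * m * n0" for n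
  proof -
    have "cmod (vinner (D_op n g) g) \<le> (real d + 1) * (C * M) * \<sigma>^n / (1 - \<sigma>)"
      using n n0 C by (intro D_op_form_geometric_bound[OF _ \<sigma> d_\<sigma> S]) (auto simp: M_def)
    also have "\<dots> \<le> (real d + 1) * C * (M * \<sigma>^n0) / (1 - \<sigma>)"
      using \<sigma> n C by (intro divide_right_mono) (auto simp: M_def intro!: mult_left_mono power_decreasing)
    also have "\<dots> \<le> (real d + 1) * C * ((1 - \<sigma>) / (2 * real m * (real d + 1) * C)) / (1 - \<sigma>)"
    proof -
      have "M * \<sigma>^n0
          \<le> (1 - \<sigma>) / (2 * real m * (real d + 1) * C) * real d powr (\<alpha> * real n0 / 2) * \<sigma>^n0"
        using M_le \<sigma> by (intro mult_right_mono) auto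
      also have "\<dots> = (1 - \<sigma>) / (2 * real m * (real d + 1) * C)"
        using \<sigma>_n0 by (simp only: mult.assoc mult.commute[of _ "\<sigma>^n0"]) simp
      finally show ?thesis
        using \<sigma> C d_pos by (intro divide_right_mono mult_left_mono) auto
    qed
    also have "\<dots> = 1 / (2 * real m)"
      using \<sigma> C d_pos m(1) by (simp add: divide_simps)
    finally show ?thesis .
  qed
  have "7 * real m * a^2 \<le> 32"
  proof (rule mass_bound[OF Teig _ _ _ _ a1 m(1) small])
    show "vnorm2 \<phi> = 1"
      using n\<phi> by (simp add: vnorm2_def)
    show "vinner g \<phi> = of_real a"
      unfolding g_def a_def by (rule vinner_restrict_set[OF E])
    show "vnorm2 g = a"
      unfolding g_def a_def by (rule vnorm2_restrict_set[OF E])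
    show "0 \<le> a"
      unfolding a_def by (simp add: sum_nonneg)
  qed
  moreover have "5 < real m * a^2"
  proof -
    have "5 \<le> real m * \<epsilon>^2" using m \<epsilon> by (simp add: field_simps)
    also have "\<dots> < real m * a^2" using m mass \<epsilon> by (simp add: a_def power_strict_mono)
    finally show ?thesis .
  qed
  ultimately show False by simp
qed

end

definition mass_support_bound ::
    "nat \<Rightarrow> real \<Rightarrow> real \<Rightarrow> real \<Rightarrow> ereal \<Rightarrow> real \<Rightarrow> real \<Rightarrow> real \<Rightarrow> bool" where
  "mass_support_bound d C \<alpha> p q \<epsilon> \<delta> c \<longleftrightarrow> (\<forall>(V::nat set) A (N::nat).
     regular_graph (d + 1) V A \<and> N \<ge> 1 \<and>
     (\<forall>n\<le>N. op_norm V (ereal p) q (S_op d A n) \<le> C * real d powr (- \<alpha> * real n))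
     \<longrightarrow> (\<forall>\<phi> E. laplace_eigenfunction d V A \<phi> \<and> (\<Sum>x\<in>V. (cmod (\<phi> x))\<^sup>2) = 1
            \<and> E \<subseteq> V \<and> (\<Sum>x\<in>E. (cmod (\<phi> x))\<^sup>2) > \<epsilon>
          \<longrightarrow> real (card E) \<ge> c * real d powr (\<delta> * real N)))"

lemma mass_support_boundI:
  assumes "\<And>V A N \<phi> E. regular_graph (d + 1) V A \<Longrightarrow> 1 \<le> N \<Longrightarrow>
      \<forall>n\<le>N. op_norm V (ereal p) q (S_op d A n) \<le> C * real d powr (- \<alpha> * real n) \<Longrightarrow>
      laplace_eigenfunction d V A \<phi> \<Longrightarrow> (\<Sum>x\<in>V. (cmod (\<phi> x))\<^sup>2) = 1 \<Longrightarrow>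
      E \<subseteq> V \<Longrightarrow> \<epsilon> < (\<Sum>x\<in>E. (cmod (\<phi> x))\<^sup>2) \<Longrightarrow>
      c * real d powr (\<delta> * real N) \<le> real (card E)"
  shows "mass_support_bound d C \<alpha> p q \<epsilon> \<delta> c"
  using assms unfolding mass_support_bound_def by blast

lemma card_ge_1_of_mass:
  assumes "regular_graph (d + 1) V A" and "E \<subseteq> V"
    and "\<epsilon> < (\<Sum>x\<in>E. (cmod (\<phi> x))\<^sup>2)" and "\<epsilon> > 0"
  shows "1 \<le> real (card E)"
proof -
  have "finite E"
    using assms(1,2) finite_subset unfolding regular_graph_def graph_def by blast
  moreover have "E \<noteq> {}"
    using assms(3,4) by auto
  ultimately show ?thesis
    by (simp add: Suc_le_eq card_gt_0_iff)
qed

lemma mass_support_bound_d_1: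
  assumes "\<epsilon> > 0"
  shows "mass_support_bound 1 C \<alpha> p q \<epsilon> \<delta> 1"
  by (rule mass_support_boundI) (use assms card_ge_1_of_mass[where d = 1] in auto)

text \<open>For \<open>\<alpha> > 1/2\<close> the hypothesis can only hold for boundedly many \<open>N\<close>, because
  \<open>\<parallel>S\<^sub>N\<parallel> \<ge> d\<^bsup>-N/2\<^esup>\<close>.\<close>

lemma theorem1_large_alpha:
  fixes d :: nat and \<epsilon> C \<alpha> p \<delta> :: real and q :: ereal
  assumes d2: "d \<ge> 2" and e: "\<epsilon> > 0" and C: "C > 0" and al: "\<alpha> > 1/2"
    and p: "1 \<le> p" and cpq: "conj_exponents p q" and \<delta>0: "\<delta> \<ge> 0"
  shows "\<exists>c>0. mass_support_bound d C \<alpha> p q \<epsilon> \<delta> c"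
proof -
  define Nb where "Nb = max 0 (ln C / ((\<alpha> - 1/2) * ln (real d)))"
  define c where "c = real d powr (- \<delta> * Nb)"
  have dgt1: "real d > 1"
    using d2 by simp
  show ?thesis
  proof (intro exI[of _ c] conjI mass_support_boundI)
    show "c > 0"
      unfolding c_def using dgt1 by simp
    fix V :: "nat set" and A N \<phi> E
    assume reg: "regular_graph (d + 1) V A" and "1 \<le> N"
      and hyp: "\<forall>n\<le>N. op_norm V (ereal p) q (S_op d A n) \<le> C * real d powr (- \<alpha> * real n)"
      and eig: "laplace_eigenfunction d V A \<phi>" and "(\<Sum>x\<in>V. (cmod (\<phi> x))\<^sup>2) = 1"
      and E: "E \<subseteq> V" and mass: "\<epsilon> < (\<Sum>x\<in>E. (cmod (\<phi> x))\<^sup>2)"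
    interpret G: nb_graph d V A
      using reg d2 by unfold_locales auto
    obtain y where "y \<in> V"
      using eig unfolding laplace_eigenfunction_def by blast
    then have "real d powr (- real N / 2) \<le> C * real d powr (- \<alpha> * real N)"
      using G.op_norm_S_op_lower[OF p conj_exponents_lp_exponent[OF cpq, THEN conjunct1]] hyp
      by (meson order.refl order.trans)
    then have "real d powr (- real N / 2) * real d powr (\<alpha> * real N) \<le> C"
      using dgt1 by (simp add: divide_simps powr_minus)
    then have "real d powr ((\<alpha> - 1/2) * real N) \<le> C"
      by (simp add: powr_add[symmetric] algebra_simps)
    then have "(\<alpha> - 1/2) * real N * ln (real d) \<le> ln C"
      using dgt1 C by (simp add: ln_powr flip: ln_le_cancel_iff)
    moreover have "ln (real d) > 0"
      using dgt1 by simp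
    ultimately have "real N \<le> ln C / ((\<alpha> - 1/2) * ln (real d))"
      using al by (simp add: field_simps)
    then have "real N \<le> Nb"
      unfolding Nb_def by simp
    then have "\<delta> * real N \<le> \<delta> * Nb"
      using \<delta>0 by (rule mult_left_mono)
    then have "c * real d powr (\<delta> * real N) \<le> real d powr 0"
      unfolding c_def using dgt1 by (simp add: powr_add[symmetric] del: powr_zero_eq_one)
    also have "\<dots> \<le> real (card E)"
      using card_ge_1_of_mass[OF reg E mass e] by simp
    finally show "c * real d powr (\<delta> * real N) \<le> real (card E)" .
  qed
qed

text \<open>For \<open>\<alpha> \<le> 1/2\<close>: with \<open>m \<approx> 5/\<epsilon>\<^sup>2\<close> and \<open>n\<^sub>0 = \<lfloor>N / 4m\<rfloor>\<close>, \<open>concentration_bound\<close> gives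
  \<open>|E| \<ge> c d\<^bsup>\<gamma> n\<^sub>0\<^esup>\<close> with \<open>\<gamma> = \<alpha> p / (2 (2 - p))\<close>, and \<open>\<gamma> n\<^sub>0 \<ge> \<delta> N - \<gamma>\<close> because
  \<open>m \<epsilon>\<^sup>2 \<le> 16\<close>.\<close>

lemma theorem1_small_alpha:
  fixes d :: nat and \<epsilon> C \<alpha> p :: real and q :: ereal
  assumes d2: "d \<ge> 2" and e: "\<epsilon> > 0" and C: "C > 0" and al: "\<alpha> > 0" "\<alpha> \<le> 1/2"
    and p: "1 \<le> p" "p < 2" and cpq: "conj_exponents p q"
    and \<delta>_def: "\<delta> = 2 powr (-7) * (\<alpha> * p / (2 - p)) * \<epsilon>\<^sup>2"
  shows "\<exists>c>0. mass_support_bound d C \<alpha> p q \<epsilon> \<delta> c"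
proof -
  define m where "m = nat \<lceil>5 / \<epsilon>^2\<rceil>"
  define \<kappa> where "\<kappa> = (1 - real d powr (-\<alpha>/2)) / (2 * real m * (real d + 1) * C)"
  define \<gamma> where "\<gamma> = \<alpha> * p / (2 * (2 - p))"
  define c1 where "c1 = \<kappa> powr (p / (2 - p)) * real d powr (- \<gamma>)"
  define c2 where "c2 = real d powr (- \<delta> * (4 * real m))"
  have dgt1: "real d > 1"
    using d2 by simp
  have m5: "5 / \<epsilon>^2 \<le> real m"
    unfolding m_def by linarith
  have "0 < 5 / \<epsilon>^2"
    using e by simp
  then have m1: "1 \<le> m"
    using m5 by linarith
  have \<kappa>: "\<kappa> > 0"
    unfolding \<kappa>_def using dgt1 al m1 C by (simp add: powr_less_one)
  have \<delta>0: "\<delta> \<ge> 0" and \<gamma>0: "\<gamma> \<ge> 0"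
    unfolding \<delta>_def \<gamma>_def using al p by simp_all
  show ?thesis
  proof (intro exI[of _ "min c1 c2"] conjI mass_support_boundI)
    show "min c1 c2 > 0"
      unfolding c1_def c2_def using \<kappa> dgt1 by simp
    fix V :: "nat set" and A N \<phi> E
    assume reg: "regular_graph (d + 1) V A" and "1 \<le> N"
      and hyp: "\<forall>n\<le>N. op_norm V (ereal p) q (S_op d A n) \<le> C * real d powr (- \<alpha> * real n)"
      and eig: "laplace_eigenfunction d V A \<phi>" and norm: "(\<Sum>x\<in>V. (cmod (\<phi> x))\<^sup>2) = 1"
      and E: "E \<subseteq> V" and mass: "\<epsilon> < (\<Sum>x\<in>E. (cmod (\<phi> x))\<^sup>2)"
    interpret G: nb_graph d V A
      using reg d2 by unfold_locales auto
    have card_E: "1 \<le> real (card E)"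
      using reg E mass e by (rule card_ge_1_of_mass)
    have "(\<Sum>x\<in>E. (cmod (\<phi> x))\<^sup>2) \<le> 1"
      using norm E G.finite_V by (metis sum_mono2 zero_le_power2)
    then have "\<epsilon> < 1"
      using mass by linarith
    define n0 where "n0 = N div (4 * m)"
    show "real (card E) \<ge> min c1 c2 * real d powr (\<delta> * real N)"
    proof (cases "n0 = 0")
      case True
      then have "real N \<le> 4 * real m"
        unfolding n0_def using m1 by (simp add: div_eq_0_iff)
      then have "c2 * real d powr (\<delta> * real N) \<le> real d powr 0"
        unfolding c2_def using dgt1 \<delta>0
        by (simp add: powr_add[symmetric] algebra_simps mult_left_mono del: powr_zero_eq_one)
      then have "c2 * real d powr (\<delta> * real N) \<le> 1"
        using dgt1 by simp
      moreover have "min c1 c2 * real d powr (\<delta> * real N) \<le> c2 * real d powr (\<delta> * real N)"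
        by (intro mult_right_mono) auto
      ultimately show ?thesis
        using card_E by linarith
    next
      case False
      have "4 * m * n0 \<le> N"
        unfolding n0_def by (simp add: mult.commute)
      then have "\<kappa> * real d powr (\<alpha> * real n0 / 2) < real (card E) powr ((2 - p) / p)"
        unfolding \<kappa>_def
        by (intro G.concentration_bound[OF d2 al C cpq p]) (use hyp eig norm E mass e m1 m5 False in auto)
      then have "(\<kappa> * real d powr (\<alpha> * real n0 / 2)) powr (1 / ((2 - p) / p)) \<le> real (card E)"
        using \<kappa> p by (intro powr_inverse_le) auto
      also have "(\<kappa> * real d powr (\<alpha> * real n0 / 2)) powr (1 / ((2 - p) / p))
          = \<kappa> powr (p / (2 - p)) * real d powr (\<gamma> * real n0)"
        unfolding \<gamma>_def using p by (simp add: powr_mult powr_powr field_simps)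
      finally have E_lower: "\<kappa> powr (p / (2 - p)) * real d powr (\<gamma> * real n0) \<le> real (card E)" .
      have "real m * \<epsilon>^2 \<le> 16"
        using nat_ceiling_div_sq_mult_less[OF e \<open>\<epsilon> < 1\<close>] by (simp add: m_def)
      then have "\<epsilon>^2 \<le> 16 / real m"
        using m1 by (simp add: field_simps)
      then have "\<alpha> * p / (2 - p) * \<epsilon>^2 / 128 \<le> \<alpha> * p / (2 - p) * (16 / real m) / 128"
        using al p by (intro divide_right_mono mult_left_mono) auto
      moreover have "\<delta> = \<alpha> * p / (2 - p) * \<epsilon>^2 / 128"
        unfolding \<delta>_def by (simp add: powr_minus_divide)
      moreover have "\<alpha> * p / (2 - p) * (16 / real m) / 128 = \<gamma> / (4 * real m)"
        unfolding \<gamma>_def using m1 p by (simp add: field_simps)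
      ultimately have "\<delta> \<le> \<gamma> / (4 * real m)"
        by simp
      then have "\<delta> * real N \<le> \<gamma> / (4 * real m) * real N"
        by (rule mult_right_mono) simp
      moreover have "\<gamma> / (4 * real m) * real N - \<gamma> = \<gamma> * (real N / (4 * real m) - 1)"
        by (simp add: algebra_simps)
      ultimately have "\<delta> * real N - \<gamma> \<le> \<gamma> * (real N / (4 * real m) - 1)"
        by linarith
      also have "\<dots> \<le> \<gamma> * real n0"
        unfolding n0_def using \<gamma>0 m1 real_div_less_div_plus_1[of "4 * m" N]
        by (intro mult_left_mono) auto
      finally have "c1 * real d powr (\<delta> * real N) \<le> \<kappa> powr (p / (2 - p)) * real d powr (\<gamma> * real n0)"
        unfolding c1_def using dgt1 by (simp add: mult.assoc powr_add[symmetric] mult_left_mono)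
      moreover have "min c1 c2 * real d powr (\<delta> * real N) \<le> c1 * real d powr (\<delta> * real N)"
        by (intro mult_right_mono) auto
      ultimately show ?thesis
        using E_lower by linarith
    qed
  qed
qed

theorem theorem1:
  fixes d :: nat and \<epsilon> C \<alpha> p :: real and q :: ereal
  assumes "d \<ge> 1" and "\<epsilon> > 0" and "C > 0" and "\<alpha> > 0"
    and "1 \<le> p" and "p < 2" and "2 < q" and "1 / ereal p + 1 / q = 1"
  shows "\<exists>c>0. \<forall>(V::nat set) A (N::nat).
     regular_graph (d + 1) V A \<and> N \<ge> 1 \<and>
     (\<forall>n\<le>N. op_norm V (ereal p) q (S_op d A n) \<le> C * real d powr (- \<alpha> * real n))
     \<longrightarrow> (\<forall>\<phi> E. laplace_eigenfunction d V A \<phi> \<and> (\<Sum>x\<in>V. (cmod (\<phi> x))\<^sup>2) = 1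
            \<and> E \<subseteq> V \<and> (\<Sum>x\<in>E. (cmod (\<phi> x))\<^sup>2) > \<epsilon>
          \<longrightarrow> real (card E) \<ge> c * real d powr ((2 powr (-7) * (\<alpha> * p / (2 - p)) * \<epsilon>\<^sup>2) * real N))"
proof -
  define \<delta> where "\<delta> = 2 powr (-7) * (\<alpha> * p / (2 - p)) * \<epsilon>\<^sup>2"
  have cpq: "conj_exponents p q"
    using assms by (intro conj_exponentsI) auto
  consider "d = 1" | "d \<ge> 2" "\<alpha> > 1/2" | "d \<ge> 2" "\<alpha> \<le> 1/2"
    using assms(1) by linarith
  then have "\<exists>c>0. mass_support_bound d C \<alpha> p q \<epsilon> \<delta> c"
  proof cases
    case 1
    then show ?thesis
      using mass_support_bound_d_1[OF assms(2)] by (intro exI[of _ 1]) auto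
  next
    case 2
    then show ?thesis
      unfolding \<delta>_def using assms cpq by (intro theorem1_large_alpha) auto
  next
    case 3
    then show ?thesis
      using assms cpq by (intro theorem1_small_alpha[OF _ _ _ _ _ _ _ cpq \<delta>_def]) auto
  qed
  then show ?thesis
    unfolding mass_support_bound_def \<delta>_def .
qed

end
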